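(* For all $\mathbf v\in\mathbf V_h$ one has $\|\mathbf v\|_{\mathbf V_{h,1}}\approx\|\mathbf v\|_{\mathbf V_h}$, i.e. $c\|\mathbf v\|_{\mathbf V_h}\le\|\mathbf v\|_{\mathbf V_{h,1}}\le C\|\mathbf v\|_{\mathbf V_h}$ with $c,C>0$ independent of $h$, $s$ and $\mathbf v$.
   Context: Geometry and mesh. Let $\Omega\subset\mathbb R^2$ be a bounded convex domain with Lipschitz, possibly curved boundary $\partial\Omega$ and unit outward normal $\widetilde{\mathbf n}$. $\mathcal T_h$ is a partition into polygons which is body-fitted: each boundary edge has both endpoints on $\partial\Omega$; $\overline{\Omega_h}=\bigcup_{K\in\mathcal T_h}K$. $h_K$ = diameter of $K$, $h=\max_Kh_K$; $\mathbf n$ denotes the unit outward normal on $\partial K$ and on $\partial\Omega_h$. $\mathcal E_h$ is the set of (straight) edges, $\mathcal E_h^B$ the boundary edges, $h_e$ the length of $e$, $s=\max_{e\in\mathcal E_h^B}h_e$ ($s\le h$). For $e\in\mathcal E_h^B$, $\tilde e\subset\partial\Omega$ is the arc between the endpoints of $e$. The meshes satisfy, with mesh-independent constants: (A1) each $K$ is star-shaped w.r.t. a ball $\mathcal B_K\subset K$ of radius $\rho_K\ge C_1h_K$; (A2) each $K$ has an edge with $h_e\ge C_2h_K$; (A3) $h\le C_3h_K$ for all $K$; (A4) for each $e\in\mathcal E_h^B$, in local Cartesian coordinates $(\hat x,\hat y)$ with $e=[0,h_e]\times\{0\}$, $\Gamma(\hat x,0)=(\hat x,\gamma(\hat x))$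 is a bijection $e\to\tilde e$ with $\sup|\gamma|\le C_4s^2$ and $\sup_{\hat x}|\mathbf n(\hat x,0)-\widetilde{\mathbf n}(\hat x,\gamma(\hat x))|\le C_4's$; (A5) $s\le C_5\min_{e\in\mathcal E_h^B}h_e$; (A6) for each $e\in\mathcal E_h^B$ with element $K$, the triangle $P(e)$ with base $e$ and apex the center of $\mathcal B_K$ (height $h_{K,e}$), mapped by $\hat{\mathbf x}\mapsto\mathrm{diag}(h_e^{-1},h_{K,e}^{-1})\hat{\mathbf x}$ in coordinates with $e$ on the abscissa and the height on the ordinate, becomes a triangle of diameter $O(1)$ with circumradius/inradius ratio $\le C_6$; and each point of $K$ lies in at most $M$ triangles $P(e)$, $e\subset\partial K\cap\partial\Omega_h$. Spaces and norms. Integers $\alpha,\beta\ge0$ with $\beta=\alpha$; each edge $e$ carries a fixed unit normal $\mathbf n_e$. $\mathbf V_h$ consists of $\mathbf v=\{\mathbf v_0,\mathbf v_b\}$ with $\mathbf v_0|_K\in[P_\alpha(K)]^2$, $\mathbf v_b|_e=v_b\mathbf n_e$ with $v_b\in P_\beta(e)$, and $\mathbf v_b=0$ on each $e\in\mathcal E_h^B$. On $e\in\mathcal E_h^B$ let $\widetilde{\mathbf n}(\hat x,0):=\widetilde{\mathbf n}(\Gamma(\hat x,0))$, and on interior edges $\widetilde{\mathbf n}=\mathbf n$. For fixed $\rho>0$: $\|\mathbf v\|_{\mathbf V_h}^2=\|\mathbf v_0\|_{0,\Omega_h}^2+\rho\sum_Kh_K^{-1}\|(\mathbf v_0-\mathbf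 v_b)\cdot\mathbf n\|_{0,\partial K}^2$ and $\|\mathbf v\|_{\mathbf V_{h,1}}^2=\|\mathbf v_0\|_{0,\Omega_h}^2+\rho\sum_Kh_K^{-1}\|(\mathbf v_0-\mathbf v_b)\cdot\widetilde{\mathbf n}\|_{0,\partial K}^2$. *)

theory Defs
  imports "HOL-Analysis.Analysis"
begin

text \<open>The plane R^2 is modelled by the type complex (Re = x, Im = y).
  An element K of the mesh is a polygon given by its list of vertices in
  counter-clockwise order; its edges are the segments between consecutive vertices.\<close>

type_synonym elem = "complex list"

definition nxt :: "elem \<Rightarrow> nat \<Rightarrow> complex" where
  "nxt K i = K ! (Suc i mod length K)"

definition edges :: "elem \<Rightarrow> (complex \<times> complex) set" where
  "edges K = {(K ! i, nxt K i) | i. i < length K}"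

text \<open>Twice the signed (shoelace) area; positive iff counter-clockwise.\<close>
definition signed_area2 :: "elem \<Rightarrow> real" where
  "signed_area2 K = (\<Sum>i<length K. Im (cnj (K ! i) * nxt K i))"

fun polychain :: "complex list \<Rightarrow> real \<Rightarrow> complex" where
  "polychain [] = linepath 0 0"
| "polychain [a] = linepath a a"
| "polychain [a, b] = linepath a b"
| "polychain (a # b # c # rest) = linepath a b +++ polychain (b # c # rest)"

definition polypath :: "elem \<Rightarrow> real \<Rightarrow> complex" where
  "polypath K = polychain (K @ [hd K])"

definition region :: "elem \<Rightarrow> complex set" where
  "region K = path_image (polypath K) \<union> inside (path_image (polypath K))"

definition is_ccw_polygon :: "elem \<Rightarrow> bool" where
  "is_ccw_polygon K \<longleftrightarrow> distinct K \<and> 3 \<le> length K \<and> simple_path (polypath K)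
     \<and> signed_area2 K > 0"

definition hK :: "elem \<Rightarrow> real" where
  "hK K = diameter (region K)"

text \<open>Unit outward normal of a CCW polygon on its edge from a to b.\<close>
definition onormal :: "complex \<Rightarrow> complex \<Rightarrow> complex" where
  "onormal a b = - \<i> * (b - a) / complex_of_real (cmod (b - a))"

definition elems_of_edge :: "elem set \<Rightarrow> complex set \<Rightarrow> elem set" where
  "elems_of_edge T e = {K \<in> T. \<exists>(a, b) \<in> edges K. closed_segment a b = e}"

definition Eh :: "elem set \<Rightarrow> complex set set" where
  "Eh T = {closed_segment a b | a b. \<exists>K \<in> T. (a, b) \<in> edges K}"

definition bedges :: "elem set \<Rightarrow> complex set set" where
  "bedges T = {e \<in> Eh T. card (elems_of_edge T e) = 1}"

definition smax :: "elem set \<Rightarrow> real" where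
  "smax T = Max (diameter ` bedges T)"

text \<open>Local boundary parametrisation of (A4): in local coordinates with origin at a and
  abscissa along b - a, Gamma(x) = (x, gamma(x)).\<close>
definition Gam :: "(complex set \<Rightarrow> real \<Rightarrow> real) \<Rightarrow> complex \<Rightarrow> complex \<Rightarrow> real \<Rightarrow> complex" where
  "Gam gam a b x = a + (b - a) / complex_of_real (cmod (b - a))
       * (complex_of_real x + \<i> * complex_of_real (gam (closed_segment a b) x))"

text \<open>nt is a (measurable-or-not) selection of the unit outward normal of the convex domain
  at its boundary points.\<close>
definition outward_normal_sel :: "complex set \<Rightarrow> (complex \<Rightarrow> complex) \<Rightarrow> bool" where
  "outward_normal_sel \<Omega> nt \<longleftrightarrow>
     (\<forall>p \<in> frontier \<Omega>. cmod (nt p) = 1 \<and> (\<forall>x \<in> \<Omega>. inner (nt p) (x - p) \<le> 0))"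

definition tri_area :: "complex \<Rightarrow> complex \<Rightarrow> complex \<Rightarrow> real" where
  "tri_area p q w = \<bar>Im ((q - p) * cnj (w - p))\<bar> / 2"

definition circumradius :: "complex \<Rightarrow> complex \<Rightarrow> complex \<Rightarrow> real" where
  "circumradius p q w = cmod (q - p) * cmod (w - q) * cmod (p - w) / (4 * tri_area p q w)"

definition inradius :: "complex \<Rightarrow> complex \<Rightarrow> complex \<Rightarrow> real" where
  "inradius p q w = 2 * tri_area p q w / (cmod (q - p) + cmod (w - q) + cmod (p - w))"

definition tri_diam :: "complex \<Rightarrow> complex \<Rightarrow> complex \<Rightarrow> real" where
  "tri_diam p q w = max (cmod (q - p)) (max (cmod (w - q)) (cmod (p - w)))"

text \<open>Image of the triangle P(e) (base a b, apex c) under diag(1/h_e, 1/h_{K,e}) in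
  coordinates with e on the abscissa and the foot of the height at the origin.\<close>
definition scaledP :: "complex \<Rightarrow> complex \<Rightarrow> complex \<Rightarrow> complex \<times> complex \<times> complex" where
  "scaledP a b c =
    (let he = cmod (b - a); u = (b - a) / complex_of_real he; xf = Re ((c - a) / u)
     in (complex_of_real (- xf / he), complex_of_real ((he - xf) / he), \<i>))"

definition star_ball :: "complex set \<Rightarrow> complex \<Rightarrow> real \<Rightarrow> bool" where
  "star_ball K c r \<longleftrightarrow> r > 0 \<and> ball c r \<subseteq> K
     \<and> (\<forall>y \<in> ball c r. \<forall>x \<in> K. closed_segment y x \<subseteq> K)"

definition mesh_partition :: "complex set \<Rightarrow> elem set \<Rightarrow> bool" where
  "mesh_partition \<Omega> T \<longleftrightarrow> finite T \<and> T \<noteq> {} \<and> (\<forall>K \<in> T. is_ccw_polygon K)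
     \<and> (\<forall>K \<in> T. \<forall>K' \<in> T. K \<noteq> K' \<longrightarrow> interior (region K) \<inter> interior (region K') = {})
     \<and> (\<forall>K \<in> T. \<forall>K' \<in> T. K \<noteq> K' \<longrightarrow> (\<forall>(a, b) \<in> edges K.
           open_segment a b \<inter> region K' \<noteq> {} \<longrightarrow> K' \<in> elems_of_edge T (closed_segment a b)))
     \<and> (\<forall>e \<in> Eh T. card (elems_of_edge T e) \<le> 2)
     \<and> (\<forall>K \<in> T. \<forall>(a, b) \<in> edges K. closed_segment a b \<in> bedges T \<longrightarrow>
           a \<in> frontier \<Omega> \<and> b \<in> frontier \<Omega>)"

definition mesh_ok ::
  "complex set \<Rightarrow> real \<Rightarrow> real \<Rightarrow> real \<Rightarrow> real \<Rightarrow> real \<Rightarrow> real \<Rightarrow> real \<Rightarrow> real \<Rightarrow> nat \<Rightarrow>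
   elem set \<Rightarrow> (elem \<Rightarrow> complex) \<Rightarrow> (elem \<Rightarrow> real) \<Rightarrow> (complex set \<Rightarrow> real \<Rightarrow> real) \<Rightarrow>
   (complex \<Rightarrow> complex) \<Rightarrow> bool" where
  "mesh_ok \<Omega> C1 C2 C3 C4 C4' C5 C6 C7 M T ctr rad gam nt \<longleftrightarrow>
     mesh_partition \<Omega> T
     \<comment> \<open>(A1)\<close>
     \<and> (\<forall>K \<in> T. star_ball (region K) (ctr K) (rad K) \<and> rad K \<ge> C1 * hK K)
     \<comment> \<open>(A2)\<close>
     \<and> (\<forall>K \<in> T. \<exists>(a, b) \<in> edges K. cmod (b - a) \<ge> C2 * hK K)
     \<comment> \<open>(A3)\<close>
     \<and> (\<forall>K \<in> T. \<forall>K' \<in> T. hK K' \<le> C3 * hK K)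
     \<comment> \<open>(A4)\<close>
     \<and> (\<forall>K \<in> T. \<forall>(a, b) \<in> edges K. closed_segment a b \<in> bedges T \<longrightarrow>
          (let he = cmod (b - a); g = gam (closed_segment a b) in
           continuous_on {0..he} g \<and> g 0 = 0 \<and> g he = 0 \<and>
           (\<forall>x \<in> {0..he}. Gam gam a b x \<in> frontier \<Omega> \<and> \<bar>g x\<bar> \<le> C4 * (smax T)\<^sup>2
              \<and> cmod (onormal a b - nt (Gam gam a b x)) \<le> C4' * smax T)))
     \<comment> \<open>(A5)\<close>
     \<and> (\<forall>e \<in> bedges T. smax T \<le> C5 * diameter e)
     \<comment> \<open>(A6)\<close>
     \<and> (\<forall>K \<in> T. \<forall>(a, b) \<in> edges K. closed_segment a b \<in> bedges T \<longrightarrow>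
          (case scaledP a b (ctr K) of (p, q, w) \<Rightarrow>
             tri_diam p q w \<le> C7 \<and> circumradius p q w / inradius p q w \<le> C6))
     \<and> (\<forall>K \<in> T. \<forall>z \<in> region K.
          card {(a, b) \<in> edges K. closed_segment a b \<in> bedges T
                 \<and> z \<in> convex hull {a, b, ctr K}} \<le> M)"

definition poly2_on :: "nat \<Rightarrow> complex set \<Rightarrow> (complex \<Rightarrow> real) \<Rightarrow> bool" where
  "poly2_on n S f \<longleftrightarrow> (\<exists>c :: nat \<Rightarrow> nat \<Rightarrow> real. \<forall>z \<in> S.
      f z = (\<Sum>i\<le>n. \<Sum>j\<le>n - i. c i j * Re z ^ i * Im z ^ j))"

definition poly1_seg :: "nat \<Rightarrow> complex \<Rightarrow> complex \<Rightarrow> (complex \<Rightarrow> real) \<Rightarrow> bool" where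
  "poly1_seg n a b f \<longleftrightarrow> (\<exists>c :: nat \<Rightarrow> real. \<forall>t \<in> {0..1}.
      f (a + complex_of_real t * (b - a)) = (\<Sum>j\<le>n. c j * t ^ j))"

definition edge_normals :: "elem set \<Rightarrow> (complex set \<Rightarrow> complex) \<Rightarrow> bool" where
  "edge_normals T ne \<longleftrightarrow> (\<forall>K \<in> T. \<forall>(a, b) \<in> edges K.
      cmod (ne (closed_segment a b)) = 1 \<and> inner (ne (closed_segment a b)) (b - a) = 0)"

text \<open>The space V_h with beta = alpha: v = {v0, vb}, v0 K the restriction to K,
  vb e the scalar v_b on e (so the vector is vb e * ne e), vanishing on boundary edges.\<close>
definition Vh_space :: "nat \<Rightarrow> elem set \<Rightarrow> (elem \<Rightarrow> complex \<Rightarrow> complex)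
     \<Rightarrow> (complex set \<Rightarrow> complex \<Rightarrow> real) \<Rightarrow> bool" where
  "Vh_space \<alpha> T v0 vb \<longleftrightarrow>
     (\<forall>K \<in> T. poly2_on \<alpha> (region K) (\<lambda>z. Re (v0 K z)) \<and> poly2_on \<alpha> (region K) (\<lambda>z. Im (v0 K z)))
     \<and> (\<forall>K \<in> T. \<forall>(a, b) \<in> edges K. poly1_seg \<alpha> a b (vb (closed_segment a b)))
     \<and> (\<forall>e \<in> bedges T. \<forall>z \<in> e. vb e z = 0)"

definition edge_int :: "complex \<Rightarrow> complex \<Rightarrow> (complex \<Rightarrow> real) \<Rightarrow> real" where
  "edge_int a b f = cmod (b - a) * integral {0..1} (\<lambda>t. f (a + complex_of_real t * (b - a)))"

definition Vnorm_with :: "(elem \<Rightarrow> complex \<Rightarrow> complex \<Rightarrow> complex \<Rightarrow> complex) \<Rightarrow> real \<Rightarrow> elem set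
     \<Rightarrow> (complex set \<Rightarrow> complex) \<Rightarrow> (elem \<Rightarrow> complex \<Rightarrow> complex) \<Rightarrow> (complex set \<Rightarrow> complex \<Rightarrow> real) \<Rightarrow> real" where
  "Vnorm_with nn \<rho> T ne v0 vb = sqrt (
     (\<Sum>K \<in> T. integral (region K) (\<lambda>z. (cmod (v0 K z))\<^sup>2))
     + \<rho> * (\<Sum>K \<in> T. (1 / hK K) * (\<Sum>(a, b) \<in> edges K.
         edge_int a b (\<lambda>z. (inner (v0 K z - complex_of_real (vb (closed_segment a b) z)
                                          * ne (closed_segment a b)) (nn K a b z))\<^sup>2))))"

definition Vh_norm :: "real \<Rightarrow> elem set \<Rightarrow> (complex set \<Rightarrow> complex) \<Rightarrow> (elem \<Rightarrow> complex \<Rightarrow> complex)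
     \<Rightarrow> (complex set \<Rightarrow> complex \<Rightarrow> real) \<Rightarrow> real" where
  "Vh_norm = Vnorm_with (\<lambda>K a b z. onormal a b)"

text \<open>n-tilde: on a boundary edge, the domain normal at Gamma(x,0), x the local abscissa of z;
  on interior edges, n.\<close>
definition ntil :: "elem set \<Rightarrow> (complex \<Rightarrow> complex) \<Rightarrow> (complex set \<Rightarrow> real \<Rightarrow> real)
     \<Rightarrow> complex \<Rightarrow> complex \<Rightarrow> complex \<Rightarrow> complex" where
  "ntil T nt gam a b z =
     (if closed_segment a b \<in> bedges T then nt (Gam gam a b (cmod (z - a))) else onormal a b)"

definition Vh1_norm :: "(complex \<Rightarrow> complex) \<Rightarrow> (complex set \<Rightarrow> real \<Rightarrow> real) \<Rightarrow> real \<Rightarrow> elem set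
     \<Rightarrow> (complex set \<Rightarrow> complex) \<Rightarrow> (elem \<Rightarrow> complex \<Rightarrow> complex)
     \<Rightarrow> (complex set \<Rightarrow> complex \<Rightarrow> real) \<Rightarrow> real" where
  "Vh1_norm nt gam \<rho> T = Vnorm_with (\<lambda>K a b z. ntil T nt gam a b z) \<rho> T"

end

theory Submission
  imports Defs "HOL-Computational_Algebra.Polynomial"
begin

(* On interior edges the two normals coincide, so only boundary edges matter.  There v_b = 0,
   and the two jump integrands differ through n - n~ only, which is at most C4' s by (A4).
   Hence (a+b)^2 <= 2 a^2 + 2 b^2 bounds each jump term by twice the other one plus
   (1/h_K) |e| sup_e |v_0|^2 (C4' s)^2.  An inverse estimate for polynomials,
   |v_0|^2 <= Lambda / h_K^2 ||v_0||^2_K, valid because K contains a ball of radius C1 h_K (A1),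
   together with s <= C3 h_K (A3) and at most M boundary edges per element (A6), turns this into
   C ||v_0||^2_K.  Summing over the elements compares the squared norms with the constant
   2 + rho M C, in both directions.

   The inverse estimate is proved on a square inside the ball by Lagrange interpolation at
   nodes where the polynomial is small, one variable at a time.

   The selection n~ of outward normals need not be measurable.  Convexity of the domain
   (built into outward_normal_sel) makes the normal along a boundary arc a monotone function of
   its slope as long as |n - n~| < 1, hence integrable; when C4' s >= 1 the element is so large
   that the crude bound by the edge length suffices. *)

section \<open>Inverse estimates for polynomials\<close>

lemma lagrange_basis_at_node:
  fixes t :: "nat \<Rightarrow> real"
  assumes inj: "inj_on t {..n}" and i: "i \<le> n" and k: "k \<le> n"
  shows "(\<Prod>j\<in>{..n}-{k}. (t i - t j) / (t k - t j)) = (if k = i then 1 else 0)"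
proof (cases "k = i")
  case True
  have "(t i - t j) / (t k - t j) = 1" if "j \<in> {..n}-{k}" for j
    using inj i that True by (auto dest: inj_onD)
  then have "(\<Prod>j\<in>{..n}-{k}. (t i - t j) / (t k - t j)) = 1" by (rule prod.neutral[OF ballI])
  with True show ?thesis by simp
next
  case False
  with i have "i \<in> {..n}-{k}" by auto
  then have "(\<Prod>j\<in>{..n}-{k}. (t i - t j) / (t k - t j)) = 0" by (intro prod_zero) auto
  with False show ?thesis by simp
qed

lemma lagrange_interpolation:
  fixes p :: "real poly" and t :: "nat \<Rightarrow> real"
  assumes deg: "degree p \<le> n" and inj: "inj_on t {..n}"
  shows "poly p x = (\<Sum>k\<le>n. poly p (t k) * (\<Prod>j\<in>{..n}-{k}. (x - t j) / (t k - t j)))"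
proof -
  define q where "q = (\<Sum>k\<le>n. smult (poly p (t k) / (\<Prod>j\<in>{..n}-{k}. t k - t j))
                                 (\<Prod>j\<in>{..n}-{k}. [:- t j, 1:]))"
  have poly_q: "poly q y = (\<Sum>k\<le>n. poly p (t k) * (\<Prod>j\<in>{..n}-{k}. (y - t j) / (t k - t j)))" for y
    unfolding q_def by (simp add: poly_sum poly_prod prod_dividef)
  have q_deg: "degree q \<le> n"
    unfolding q_def
  proof (intro degree_sum_le order_trans[OF degree_smult_le])
    fix k assume "k \<in> {..n}"
    have "degree (\<Prod>j\<in>{..n}-{k}. [:- t j, 1:]) \<le> sum (degree \<circ> (\<lambda>j. [:- t j, 1:])) ({..n}-{k})"
      by (rule degree_prod_sum_le) simp
    also have "\<dots> = n" using \<open>k \<in> {..n}\<close> by simp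
    finally show "degree (\<Prod>j\<in>{..n}-{k}. [:- t j, 1:]) \<le> n" .
  qed simp
  have q_nodes: "poly q (t i) = poly p (t i)" if i: "i \<le> n" for i
  proof -
    have "poly q (t i) = (\<Sum>k\<le>n. if k = i then poly p (t i) else 0)"
      unfolding poly_q by (rule sum.cong) (auto simp: lagrange_basis_at_node[OF inj i])
    also have "\<dots> = poly p (t i)" using i by simp
    finally show ?thesis .
  qed
  have "card (t ` {..n}) = Suc n" using inj by (simp add: card_image)
  then have "p = q"
    using q_nodes deg q_deg by (intro poly_eqI_degree[of "t ` {..n}"]) force+
  then have "poly p x = poly q x" by simp
  also have "\<dots> = (\<Sum>k\<le>n. poly p (t k) * (\<Prod>j\<in>{..n}-{k}. (x - t j) / (t k - t j)))"
    by (rule poly_q)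
  finally show ?thesis .
qed

lemma lagrange_basis_abs_le:
  fixes t :: "nat \<Rightarrow> real"
  assumes w: "w > 0" and k: "k \<le> n"
    and sep: "\<And>j. j \<le> n \<Longrightarrow> j \<noteq> k \<Longrightarrow> w \<le> \<bar>t k - t j\<bar>"
    and near: "\<And>j. j \<le> n \<Longrightarrow> \<bar>x - t j\<bar> \<le> R * w"
  shows "\<bar>\<Prod>j\<in>{..n}-{k}. (x - t j) / (t k - t j)\<bar> \<le> R ^ n"
proof -
  have "\<bar>\<Prod>j\<in>{..n}-{k}. (x - t j) / (t k - t j)\<bar>
      = (\<Prod>j\<in>{..n}-{k}. \<bar>x - t j\<bar> / \<bar>t k - t j\<bar>)"
    by (simp add: abs_prod)
  also have "\<dots> \<le> (\<Prod>j\<in>{..n}-{k}. R)"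
  proof (rule prod_mono)
    fix j assume j: "j \<in> {..n}-{k}"
    have "\<bar>x - t j\<bar> / \<bar>t k - t j\<bar> \<le> (R * w) / w"
      using sep near j w abs_ge_zero order_trans by (intro frac_le) blast+
    then show "0 \<le> \<bar>x - t j\<bar> / \<bar>t k - t j\<bar> \<and> \<bar>x - t j\<bar> / \<bar>t k - t j\<bar> \<le> R"
      using w by simp
  qed
  also have "\<dots> = R ^ n" using k by simp
  finally show ?thesis .
qed

lemma poly_abs_le_nodes:
  fixes p :: "real poly" and t :: "nat \<Rightarrow> real"
  assumes deg: "degree p \<le> n" and w: "w > 0"
    and sep: "\<And>j k. j \<le> n \<Longrightarrow> k \<le> n \<Longrightarrow> j \<noteq> k \<Longrightarrow> w \<le> \<bar>t k - t j\<bar>"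
    and near: "\<And>j. j \<le> n \<Longrightarrow> \<bar>x - t j\<bar> \<le> R * w"
    and val: "\<And>k. k \<le> n \<Longrightarrow> \<bar>poly p (t k)\<bar> \<le> S"
  shows "\<bar>poly p x\<bar> \<le> (n + 1) * S * R ^ n"
proof -
  have inj: "inj_on t {..n}"
    by (rule inj_onI) (use sep w in fastforce)
  have "\<bar>poly p x\<bar> = \<bar>\<Sum>k\<le>n. poly p (t k) * (\<Prod>j\<in>{..n}-{k}. (x - t j) / (t k - t j))\<bar>"
    by (simp only: lagrange_interpolation[OF deg inj, of x])
  also have "\<dots> \<le> (\<Sum>k\<le>n. \<bar>poly p (t k) * (\<Prod>j\<in>{..n}-{k}. (x - t j) / (t k - t j))\<bar>)"
    by (rule sum_abs)
  also have "\<dots> \<le> (\<Sum>k\<le>n. S * R ^ n)"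
    unfolding abs_mult
    by (intro sum_mono mult_mono' val lagrange_basis_abs_le[OF w] sep near) auto
  finally show ?thesis by (simp add: algebra_simps)
qed

lemma separated_nodes_below_mean:
  fixes f :: "real \<Rightarrow> real"
  assumes f: "continuous_on {m - l..m + l} f" "\<And>t. t \<in> {m - l..m + l} \<Longrightarrow> 0 \<le> f t"
    and l: "l > 0"
  obtains t :: "nat \<Rightarrow> real" where
    "\<And>k. k \<le> n \<Longrightarrow> t k \<in> {m - l..m + l}"
    "\<And>j k. j \<le> n \<Longrightarrow> k \<le> n \<Longrightarrow> j \<noteq> k \<Longrightarrow> l / (real n + 1) \<le> \<bar>t k - t j\<bar>"
    "\<And>k. k \<le> n \<Longrightarrow> l / (real n + 1) * f (t k) \<le> integral {m - l..m + l} f"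
proof -
  define w where "w = l / (real n + 1)"
  have w: "w > 0" using l by (simp add: w_def)
  \<comment> \<open>the nodes are minimisers of \<open>f\<close> on \<open>n + 1\<close> disjoint subintervals of length \<open>w\<close>\<close>
  define J where "J k = {m - l + 2 * k * w..m - l + (2 * k + 1) * w}" for k :: nat
  have J_sub: "J k \<subseteq> {m - l..m + l}" if "k \<le> n" for k
  proof -
    have "(2 * k + 1) * w \<le> 2 * (real n + 1) * w" using that w by (intro mult_right_mono) auto
    also have "\<dots> = 2 * l" unfolding w_def by (simp add: field_simps)
    finally show ?thesis using w unfolding J_def by auto
  qed
  have "\<exists>s \<in> J k. \<forall>y \<in> J k. f s \<le> f y" if "k \<le> n" for k
  proof (rule continuous_attains_inf)
    show "J k \<noteq> {}" using w unfolding J_def by simp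
  qed (use continuous_on_subset[OF f(1) J_sub[OF that]] in \<open>auto simp: J_def\<close>)
  then obtain t where t: "\<And>k. k \<le> n \<Longrightarrow> t k \<in> J k"
    and t_min: "\<And>k y. k \<le> n \<Longrightarrow> y \<in> J k \<Longrightarrow> f (t k) \<le> f y"
    by metis
  have f_int: "f integrable_on {a..b}" if "{a..b} \<subseteq> {m - l..m + l}" for a b
    using continuous_on_subset[OF f(1) that] by (rule integrable_continuous_interval)
  have sep_lt: "w \<le> t k - t j" if "j < k" "k \<le> n" for j k
  proof -
    have "(2 * j + 2) * w \<le> (2 * k) * w" using that w by (intro mult_right_mono) auto
    then show ?thesis using t[of j] t[of k] that unfolding J_def by (simp add: algebra_simps)
  qed
  show ?thesis
  proof (rule that[of t], unfold w_def[symmetric])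
    show "t k \<in> {m - l..m + l}" if "k \<le> n" for k using t[OF that] J_sub[OF that] by blast
    show "w \<le> \<bar>t k - t j\<bar>" if "j \<le> n" "k \<le> n" "j \<noteq> k" for j k
      using that sep_lt[of j k] sep_lt[of k j] by (cases "j < k") auto
    show "w * f (t k) \<le> integral {m - l..m + l} f" if "k \<le> n" for k
    proof -
      have "w * f (t k) = integral (J k) (\<lambda>y. f (t k))" unfolding J_def using w by (simp add: algebra_simps)
      also have "\<dots> \<le> integral (J k) f"
        using t_min[OF that] J_sub[OF that] unfolding J_def by (intro integral_le f_int) auto
      also have "\<dots> \<le> integral {m - l..m + l} f"
        using J_sub[OF that] f(2) unfolding J_def by (intro integral_subset_le f_int) auto
      finally show ?thesis .
    qed
  qed
qed

lemma poly_sq_le_integral: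
  fixes p :: "real poly"
  assumes A: "A \<ge> 0" and deg: "degree p \<le> n" and l: "l > 0" and x: "\<bar>x - m\<bar> \<le> A * l"
  shows "(poly p x)\<^sup>2 \<le> ((A + 1) * (real n + 1)) ^ (2 * n) * (real n + 1) ^ 3 / l
                          * integral {m - l..m + l} (\<lambda>t. (poly p t)\<^sup>2)"
proof -
  define w where "w = l / (real n + 1)"
  have w: "w > 0" using l by (simp add: w_def)
  define I where "I = integral {m - l..m + l} (\<lambda>t. (poly p t)\<^sup>2)"
  obtain t where t: "\<And>k. k \<le> n \<Longrightarrow> t k \<in> {m - l..m + l}"
    and sep: "\<And>j k. j \<le> n \<Longrightarrow> k \<le> n \<Longrightarrow> j \<noteq> k \<Longrightarrow> w \<le> \<bar>t k - t j\<bar>"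
    and below: "\<And>k. k \<le> n \<Longrightarrow> w * (poly p (t k))\<^sup>2 \<le> I"
    unfolding w_def I_def
    by (rule separated_nodes_below_mean[where f = "\<lambda>t. (poly p t)\<^sup>2" and n = n, OF _ _ l])
      (auto intro!: continuous_intros)
  have val: "\<bar>poly p (t k)\<bar> \<le> sqrt (I / w)" if "k \<le> n" for k
  proof -
    have "(poly p (t k))\<^sup>2 \<le> I / w" using below[OF that] w by (simp add: field_simps)
    then show ?thesis using real_sqrt_le_mono by fastforce
  qed
  define R where "R = (A + 1) * (real n + 1)"
  have near: "\<bar>x - t j\<bar> \<le> R * w" if "j \<le> n" for j
  proof -
    have "\<bar>x - t j\<bar> \<le> A * l + l" using t[OF that] x by auto
    also have "\<dots> = R * w" unfolding R_def w_def by (simp add: field_simps)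
    finally show ?thesis .
  qed
  have "0 \<le> I" unfolding I_def by (intro integral_nonneg integrable_continuous_interval continuous_intros) auto
  have "\<bar>poly p x\<bar> \<le> (real n + 1) * sqrt (I / w) * R ^ n"
    by (rule poly_abs_le_nodes[OF deg w sep near val])
  then have "(poly p x)\<^sup>2 \<le> ((real n + 1) * sqrt (I / w) * R ^ n)\<^sup>2"
    by (metis abs_ge_zero power2_abs power_mono)
  also have "\<dots> = (real n + 1)\<^sup>2 * (sqrt (I / w))\<^sup>2 * R ^ (2 * n)"
    by (simp add: power_mult_distrib power_even_eq)
  also have "(sqrt (I / w))\<^sup>2 = (real n + 1) / l * I"
    using \<open>0 \<le> I\<close> l unfolding w_def by (simp add: mult.commute)
  also have "(real n + 1)\<^sup>2 * ((real n + 1) / l * I) * R ^ (2 * n) = R ^ (2 * n) * (real n + 1) ^ 3 / l * I"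
    by (simp add: power2_eq_square power3_eq_cube)
  finally show ?thesis unfolding R_def I_def .
qed

lemma image_Re_Im_cbox: "(\<lambda>z. (Re z, Im z)) ` cbox u v = cbox (Re u, Im u) (Re v, Im v)"
proof
  show "cbox (Re u, Im u) (Re v, Im v) \<subseteq> (\<lambda>z. (Re z, Im z)) ` cbox u v"
  proof
    fix p assume "p \<in> cbox (Re u, Im u) (Re v, Im v)"
    then have "Complex (fst p) (snd p) \<in> cbox u v" by (auto simp: cbox_Pair_eq in_cbox_complex_iff)
    then show "p \<in> (\<lambda>z. (Re z, Im z)) ` cbox u v" by (rule rev_image_eqI) simp
  qed
qed (auto simp: cbox_Pair_eq in_cbox_complex_iff)

lemma image_Complex_cbox:
  "(\<lambda>p. Complex (fst p) (snd p)) ` cbox (a1, a2) (b1, b2) = cbox (Complex a1 a2) (Complex b1 b2)"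
  by (simp add: cbox_Complex_eq cbox_Pair_eq case_prod_unfold)

lemma content_cbox_complex:
  "Henstock_Kurzweil_Integration.content (cbox u v)
     = Henstock_Kurzweil_Integration.content (cbox (Re u, Im u) (Re v, Im v))"
proof (cases "Re u \<le> Re v \<and> Im u \<le> Im v")
  case True
  then have "cbox u v \<noteq> {}" by (auto simp: in_cbox_complex_iff intro!: exI[of _ u])
  then have "Henstock_Kurzweil_Integration.content (cbox u v) = (Re v - Re u) * (Im v - Im u)"
    by (simp add: content_cbox_if Basis_complex_def)
  then show ?thesis using True by (simp add: content_Pair)
next
  case False
  then have "cbox u v = {}" "cbox (Re u, Im u) (Re v, Im v) = {}"
    by (auto simp: in_cbox_complex_iff cbox_Pair_eq)
  then show ?thesis by simp
qed

lemma integral_cbox_Complex: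
  fixes F :: "real \<times> real \<Rightarrow> real"
  assumes "F integrable_on cbox (a1, a2) (b1, b2)"
  shows "integral (cbox (Complex a1 a2) (Complex b1 b2)) (\<lambda>z. F (Re z, Im z))
           = integral (cbox (a1, a2) (b1, b2)) F"
proof -
  have "((\<lambda>z. F (Re z, Im z)) has_integral (1 / 1) *\<^sub>R integral (cbox (a1, a2) (b1, b2)) F)
         ((\<lambda>p. Complex (fst p) (snd p)) ` cbox (a1, a2) (b1, b2))"
  proof (rule has_integral_twiddle[where g = "\<lambda>z. (Re z, Im z)"])
    show "\<exists>w z. (\<lambda>p. Complex (fst p) (snd p)) ` cbox u v = cbox w z" for u v :: "real \<times> real"
      using image_Complex_cbox[of "fst u" "snd u" "fst v" "snd v"] by auto
    show "Henstock_Kurzweil_Integration.content ((\<lambda>z. (Re z, Im z)) ` cbox u v)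
        = 1 * Henstock_Kurzweil_Integration.content (cbox u v)" for u v
      by (simp add: image_Re_Im_cbox content_cbox_complex)
  qed (use assms image_Re_Im_cbox in \<open>auto intro!: continuous_intros\<close>)
  then show ?thesis by (simp add: image_Complex_cbox integral_unique)
qed

definition poly2 :: "nat \<Rightarrow> (nat \<Rightarrow> nat \<Rightarrow> real) \<Rightarrow> complex \<Rightarrow> real" where
  "poly2 n c z = (\<Sum>i\<le>n. \<Sum>j\<le>n - i. c i j * Re z ^ i * Im z ^ j)"

lemma poly2_on_iff: "poly2_on n S f \<longleftrightarrow> (\<exists>c. \<forall>z \<in> S. f z = poly2 n c z)"
  by (simp add: poly2_on_def poly2_def)

lemma continuous_on_poly2 [continuous_intros]: "continuous_on S (poly2 n c)"
  unfolding poly2_def by (intro continuous_intros)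

lemma poly2_Re_slice: "\<exists>p. degree p \<le> n \<and> (\<forall>x. poly2 n c (Complex x y) = poly p x)"
  by (intro exI[of _ "\<Sum>i\<le>n. \<Sum>j\<le>n - i. monom (c i j * y ^ j) i"] conjI degree_sum_le)
     (auto intro: order_trans[OF degree_monom_le] simp: poly2_def poly_sum poly_monom algebra_simps)

lemma poly2_Im_slice: "\<exists>p. degree p \<le> n \<and> (\<forall>y. poly2 n c (Complex x y) = poly p y)"
  by (intro exI[of _ "\<Sum>i\<le>n. \<Sum>j\<le>n - i. monom (c i j * x ^ i) j"] conjI degree_sum_le)
     (auto intro: order_trans[OF degree_monom_le] simp: poly2_def poly_sum poly_monom algebra_simps)

lemma poly2_sq_le_integral:
  fixes c :: "nat \<Rightarrow> nat \<Rightarrow> real"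
  assumes A: "A \<ge> 0" and l: "l > 0" and zx: "\<bar>Re z - m1\<bar> \<le> A * l" and zy: "\<bar>Im z - m2\<bar> \<le> A * l"
  shows "(poly2 n c z)\<^sup>2 \<le> (((A + 1) * (real n + 1)) ^ (2 * n) * (real n + 1) ^ 3)\<^sup>2 / l\<^sup>2
           * integral (cbox (Complex (m1 - l) (m2 - l)) (Complex (m1 + l) (m2 + l))) (\<lambda>w. (poly2 n c w)\<^sup>2)"
proof -
  define L where "L = ((A + 1) * (real n + 1)) ^ (2 * n) * (real n + 1) ^ 3"
  have L0: "0 \<le> L" unfolding L_def using A by simp
  define F where "F p = (poly2 n c (Complex (fst p) (snd p)))\<^sup>2" for p
  have F_cont: "continuous_on S F" for S unfolding F_def poly2_def by (intro continuous_intros)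
  define G where "G u = integral {m2 - l..m2 + l} (\<lambda>v. F (u, v))" for u
  have "continuous_on UNIV (\<lambda>u. integral (cbox (m2 - l) (m2 + l)) (\<lambda>v. F (u, v)))"
    by (rule integral_continuous_on_param) (simp add: F_cont case_prod_unfold)
  then have G_cont: "continuous_on S G" for S
    unfolding G_def by (auto intro: continuous_on_subset)
  have Fx: "F (Re z, Im z) \<le> L / l * integral {m1 - l..m1 + l} (\<lambda>u. F (u, Im z))"
  proof -
    obtain p where "degree p \<le> n" and p: "\<And>x. poly2 n c (Complex x (Im z)) = poly p x"
      using poly2_Re_slice by blast
    have "F (x, Im z) = (poly p x)\<^sup>2" for x unfolding F_def by (simp only: fst_conv snd_conv p)
    with poly_sq_le_integral[OF A \<open>degree p \<le> n\<close> l zx] show ?thesis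
      unfolding L_def by simp
  qed
  have Fy: "F (u, Im z) \<le> L / l * G u" for u
  proof -
    obtain q where "degree q \<le> n" and q: "\<And>y. poly2 n c (Complex u y) = poly q y"
      using poly2_Im_slice by blast
    from poly_sq_le_integral[OF A this(1) l zy] show ?thesis
      unfolding F_def G_def L_def by (simp add: q)
  qed
  have "integral {m1 - l..m1 + l} (\<lambda>u. F (u, Im z)) \<le> integral {m1 - l..m1 + l} (\<lambda>u. L / l * G u)"
    using Fy by (intro integral_le integrable_continuous_interval continuous_intros G_cont
        continuous_on_compose2[OF F_cont[of UNIV]]) auto
  also have "\<dots> = L / l * integral (cbox (m1 - l, m2 - l) (m1 + l, m2 + l)) F"
    using integral_prod_continuous[OF F_cont] unfolding G_def by simp
  also have "integral (cbox (m1 - l, m2 - l) (m1 + l, m2 + l)) F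
      = integral (cbox (Complex (m1 - l) (m2 - l)) (Complex (m1 + l) (m2 + l))) (\<lambda>w. (poly2 n c w)\<^sup>2)"
    using integral_cbox_Complex[OF integrable_continuous[OF F_cont]] unfolding F_def by simp
  finally have "integral {m1 - l..m1 + l} (\<lambda>u. F (u, Im z))
      \<le> L / l * integral (cbox (Complex (m1 - l) (m2 - l)) (Complex (m1 + l) (m2 + l))) (\<lambda>w. (poly2 n c w)\<^sup>2)" .
  with Fx L0 l have "F (Re z, Im z) \<le> L / l * (L / l
      * integral (cbox (Complex (m1 - l) (m2 - l)) (Complex (m1 + l) (m2 + l))) (\<lambda>w. (poly2 n c w)\<^sup>2))"
    by (meson divide_nonneg_pos mult_left_mono order_trans)
  then show ?thesis unfolding F_def L_def by (simp add: power2_eq_square)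
qed

lemma integrable_continuous_compact:
  fixes f :: "'a::euclidean_space \<Rightarrow> real"
  assumes "continuous_on S f" "compact S"
  shows "f integrable_on S"
proof -
  obtain B where B: "\<And>x. x \<in> S \<Longrightarrow> norm (f x) \<le> B"
    using compact_imp_bounded[OF compact_continuous_image[OF assms]] unfolding bounded_iff by auto
  have "S \<in> lmeasurable" using assms(2) by (rule lmeasurable_compact)
  then have S: "S \<in> sets lebesgue" by auto
  show ?thesis
  proof (rule measurable_bounded_by_integrable_imp_integrable_real[OF _ _ _ S])
    show "\<bar>f x\<bar> \<le> B" if "x \<in> S" for x using B[OF that] by simp
    show "f \<in> borel_measurable (lebesgue_on S)"
      using assms(1) S by (rule continuous_imp_measurable_on_sets_lebesgue)
    show "(\<lambda>x. B) integrable_on S" using \<open>S \<in> lmeasurable\<close> by (rule integrable_on_const)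
  qed
qed

definition inverse_const :: "real \<Rightarrow> nat \<Rightarrow> real" where
  "inverse_const C1 n = 9 * (((3 / C1 + 1) * (real n + 1)) ^ (2 * n) * (real n + 1) ^ 3)\<^sup>2 / C1\<^sup>2"

lemma inverse_const_nonneg: "0 \<le> inverse_const C1 n"
  unfolding inverse_const_def by simp

lemma cbox_square_subset_ball:
  assumes "l > 0"
  shows "cbox (Complex (Re c - l) (Im c - l)) (Complex (Re c + l) (Im c + l)) \<subseteq> ball c (3 * l)"
proof
  fix w assume "w \<in> cbox (Complex (Re c - l) (Im c - l)) (Complex (Re c + l) (Im c + l))"
  then have "cmod (c - w) \<le> 2 * l"
    using cmod_le[of "c - w"] by (auto simp: in_cbox_complex_iff)
  then show "w \<in> ball c (3 * l)" using assms by (simp add: dist_norm)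
qed

lemma poly2_inverse_estimate:
  fixes S :: "complex set" and v :: "complex \<Rightarrow> complex"
  assumes S: "compact S" and C1: "C1 > 0" and r: "r > 0" "ball c r \<subseteq> S" "C1 * diameter S \<le> r"
    and re: "poly2_on n S (\<lambda>z. Re (v z))" and im: "poly2_on n S (\<lambda>z. Im (v z))"
    and z: "z \<in> S"
  shows "(cmod (v z))\<^sup>2 \<le> inverse_const C1 n / (diameter S)\<^sup>2 * integral S (\<lambda>z. (cmod (v z))\<^sup>2)"
proof -
  obtain a b where ab: "\<And>w. w \<in> S \<Longrightarrow> v w = Complex (poly2 n a w) (poly2 n b w)"
    using re im by (auto simp: poly2_on_iff complex_eq_iff)
  define g where "g w = (poly2 n a w)\<^sup>2 + (poly2 n b w)\<^sup>2" for w
  have g_cont: "continuous_on U g" for U unfolding g_def by (intro continuous_intros)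
  have vg: "(cmod (v w))\<^sup>2 = g w" if "w \<in> S" for w using ab[OF that] by (simp add: g_def cmod_power2)
  define l where "l = r / 3"
  have l: "l > 0" using r by (simp add: l_def)
  define Q where "Q = cbox (Complex (Re c - l) (Im c - l)) (Complex (Re c + l) (Im c + l))"
  have QS: "Q \<subseteq> S"
    using cbox_square_subset_ball[OF l, of c] r unfolding Q_def l_def by simp
  have "c \<in> S" using r by auto
  then have "cmod (z - c) \<le> diameter S"
    using diameter_bounded_bound[OF compact_imp_bounded[OF S] z] by (simp add: dist_norm)
  also have "\<dots> \<le> 3 / C1 * l" using r C1 unfolding l_def by (simp add: field_simps mult.commute)
  finally have zx: "\<bar>Re z - Re c\<bar> \<le> 3 / C1 * l" and zy: "\<bar>Im z - Im c\<bar> \<le> 3 / C1 * l"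
    using abs_Re_le_cmod[of "z - c"] abs_Im_le_cmod[of "z - c"] by auto
  define L where "L = (((3 / C1 + 1) * (real n + 1)) ^ (2 * n) * (real n + 1) ^ 3)\<^sup>2"
  have "g z \<le> L / l\<^sup>2 * (integral Q (\<lambda>w. (poly2 n a w)\<^sup>2) + integral Q (\<lambda>w. (poly2 n b w)\<^sup>2))"
    using poly2_sq_le_integral[OF _ l zx zy, of n a] poly2_sq_le_integral[OF _ l zx zy, of n b] C1
    unfolding g_def L_def Q_def by (simp add: distrib_left)
  also have "\<dots> = L / l\<^sup>2 * integral Q g"
    unfolding g_def Q_def by (subst integral_add) (auto intro!: integrable_continuous continuous_intros)
  also have "\<dots> \<le> L / l\<^sup>2 * integral S g"
    using QS integrable_continuous_compact[OF g_cont S] unfolding Q_def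
    by (intro mult_left_mono integral_subset_le integrable_continuous g_cont) (auto simp: g_def L_def)
  also have "\<dots> \<le> inverse_const C1 n / (diameter S)\<^sup>2 * integral S g"
  proof (rule mult_right_mono)
    have "0 < C1 * diameter S" using diameter_subset[OF r(2) compact_imp_bounded[OF S]] r C1 by simp
    then have "9 * L / r\<^sup>2 \<le> 9 * L / (C1 * diameter S)\<^sup>2"
      using r by (intro divide_left_mono power_mono mult_pos_pos) (auto simp: L_def)
    then show "L / l\<^sup>2 \<le> inverse_const C1 n / (diameter S)\<^sup>2"
      unfolding inverse_const_def L_def l_def by (simp add: power_mult_distrib field_simps)
    show "0 \<le> integral S g"
      using integrable_continuous_compact[OF g_cont S] by (rule integral_nonneg) (simp add: g_def)
  qed
  finally show ?thesis using vg z integral_cong[of S "\<lambda>z. (cmod (v z))\<^sup>2" g] by simp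
qed

section \<open>Polygonal elements\<close>

lemma pathstart_polychain [simp]: "pathstart (polychain (a # L)) = a"
  by (cases L rule: remdups_adj.cases) simp_all

lemma path_polychain: "path (polychain L)"
proof (induction L rule: polychain.induct)
  case (3 a b)
  then show ?case by simp
next
  case (4 a b c rest)
  then show ?case by simp
qed (simp_all add: path_def)

lemma closed_segment_subset_polychain:
  "Suc i < length L \<Longrightarrow> closed_segment (L ! i) (L ! Suc i) \<subseteq> path_image (polychain L)"
proof (induction L arbitrary: i rule: polychain.induct)
  case (4 a b c rest)
  have "path_image (polychain (a # b # c # rest)) = closed_segment a b \<union> path_image (polychain (b # c # rest))"
    by (simp add: path_image_join)
  with 4 show ?case by (cases i) auto
qed auto

lemma compact_region: "compact (region K)"
proof -
  have p: "path (polypath K)" unfolding polypath_def by (rule path_polychain)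
  then have "bounded (path_image (polypath K) \<union> inside (path_image (polypath K)))"
    by (simp add: bounded_path_image bounded_inside)
  then show ?thesis
    unfolding region_def compact_eq_bounded_closed using closed_path_image_Un_inside[OF p] by simp
qed

lemma finite_edges: "finite (edges K)"
proof -
  have "edges K = (\<lambda>i. (K ! i, nxt K i)) ` {..<length K}" unfolding edges_def by auto
  then show ?thesis by simp
qed

lemma closed_segment_edge_subset_region:
  assumes "(a, b) \<in> edges K"
  shows "closed_segment a b \<subseteq> region K"
proof -
  obtain i where i: "i < length K" "a = K ! i" "b = nxt K i" using assms unfolding edges_def by auto
  have "(K @ [hd K]) ! Suc i = b"
  proof (cases "Suc i < length K")
    case False
    then have "Suc i = length K" "K \<noteq> []" using i by auto
    then show ?thesis using i by (simp add: nth_append nxt_def hd_conv_nth)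
  qed (use i in \<open>simp add: nth_append nxt_def\<close>)
  moreover have "(K @ [hd K]) ! i = a" using i by (simp add: nth_append)
  ultimately have "closed_segment a b \<subseteq> path_image (polypath K)"
    unfolding polypath_def using closed_segment_subset_polychain[of i "K @ [hd K]"] i by simp
  then show ?thesis unfolding region_def by auto
qed

lemma edge_length_le_hK: "(a, b) \<in> edges K \<Longrightarrow> cmod (b - a) \<le> hK K"
  using diameter_bounded_bound[OF compact_imp_bounded[OF compact_region]]
    closed_segment_edge_subset_region
  unfolding hK_def by (fastforce simp: dist_norm norm_minus_commute)

lemma edge_endpoints_distinct:
  assumes "is_ccw_polygon K" "(a, b) \<in> edges K"
  shows "a \<noteq> b"
proof -
  obtain i where i: "i < length K" "a = K ! i" "b = nxt K i" using assms(2) unfolding edges_def by auto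
  have "distinct K" "3 \<le> length K" using assms(1) unfolding is_ccw_polygon_def by auto
  moreover have "Suc i mod length K \<noteq> i"
  proof (cases "Suc i < length K")
    case False
    then have "Suc i = length K" using i by simp
    then show ?thesis using \<open>3 \<le> length K\<close> by simp
  qed simp
  moreover have "Suc i mod length K < length K" by (rule mod_less_divisor) (use i in auto)
  ultimately show ?thesis using i nth_eq_iff_index_eq[of K i "Suc i mod length K"] by (simp add: nxt_def)
qed

section \<open>The domain normal along a boundary arc\<close>

lemma outward_normal_sel_closure:
  assumes "outward_normal_sel \<Omega> nt" "p \<in> frontier \<Omega>" "q \<in> closure \<Omega>"
  shows "inner (nt p) (q - p) \<le> 0"
proof -
  have "\<Omega> \<subseteq> {w. inner (nt p) (w - p) \<le> 0}"
    using assms(1,2) unfolding outward_normal_sel_def by auto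
  then have "closure \<Omega> \<subseteq> {w. inner (nt p) (w - p) \<le> 0}"
    by (intro closure_minimal closed_Collect_le continuous_intros)
  then show ?thesis using assms(3) by auto
qed

lemma inner_mult_unit:
  fixes u x y :: complex
  assumes "cmod u = 1"
  shows "inner (u * x) (u * y) = inner x y"
proof -
  have "(Re u)\<^sup>2 + (Im u)\<^sup>2 = 1" using assms by (simp add: cmod_power2[symmetric])
  moreover have "inner (u * x) (u * y) = ((Re u)\<^sup>2 + (Im u)\<^sup>2) * inner x y"
    by (simp add: inner_complex_def algebra_simps power2_eq_square)
  ultimately show ?thesis by simp
qed

lemma support_slope_mono:
  fixes N :: "real \<Rightarrow> complex" and g :: "real \<Rightarrow> real"
  assumes neg: "\<And>x. x \<in> I \<Longrightarrow> Im (N x) < 0"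
    and supp: "\<And>x y. x \<in> I \<Longrightarrow> y \<in> I \<Longrightarrow> Re (N x) * (y - x) + Im (N x) * (g y - g x) \<le> 0"
    and xy: "x \<in> I" "y \<in> I" "x \<le> y"
  shows "Re (N x) / - Im (N x) \<le> Re (N y) / - Im (N y)"
proof (cases "x = y")
  case False
  define \<sigma> where "\<sigma> x = Re (N x) / - Im (N x)" for x
  have "\<sigma> x * (y - x) - (g y - g x) \<le> 0"
    using supp[of x y] neg[of x] xy unfolding \<sigma>_def by (simp add: field_simps)
  moreover have "\<sigma> y * (x - y) - (g x - g y) \<le> 0"
    using supp[of y x] neg[of y] xy unfolding \<sigma>_def by (simp add: field_simps)
  ultimately have "(\<sigma> x - \<sigma> y) * (y - x) \<le> 0" by (simp add: algebra_simps)
  then show ?thesis using xy False unfolding \<sigma>_def by (simp add: mult_le_0_iff)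
qed simp

definition unit_normal_of_slope :: "real \<Rightarrow> complex" where
  "unit_normal_of_slope s = Complex s (-1) / complex_of_real (sqrt (1 + s\<^sup>2))"

lemma norm_unit_normal_of_slope [simp]: "cmod (unit_normal_of_slope s) = 1"
proof -
  have "cmod (Complex s (-1)) = sqrt (1 + s\<^sup>2)" by (simp add: cmod_def)
  moreover have "sqrt (1 + s\<^sup>2) > 0" by (simp add: add_pos_nonneg)
  ultimately show ?thesis unfolding unit_normal_of_slope_def by (simp add: norm_divide)
qed

lemma continuous_on_unit_normal_of_slope: "continuous_on S unit_normal_of_slope"
proof -
  have "sqrt (1 + s\<^sup>2) > 0" for s :: real by (simp add: add_pos_nonneg)
  then have "complex_of_real (sqrt (1 + s\<^sup>2)) \<noteq> 0" for s
    by (metis of_real_eq_0_iff less_irrefl)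
  then show ?thesis unfolding unit_normal_of_slope_def by (intro continuous_intros) auto
qed

lemma unit_normal_of_slope_eq:
  assumes "cmod N = 1" "Im N < 0"
  shows "unit_normal_of_slope (Re N / - Im N) = N"
proof -
  obtain x y where N: "N = Complex x y" by (rule complex.exhaust)
  have y: "y < 0" and xy: "x\<^sup>2 + y\<^sup>2 = 1"
    using assms unfolding N by (simp_all add: cmod_def)
  then have "1 + (x / - y)\<^sup>2 = 1 / y\<^sup>2" by (simp add: field_simps power2_eq_square)
  then have "sqrt (1 + (x / - y)\<^sup>2) = - 1 / y" using y by (simp add: real_sqrt_divide)
  then have "unit_normal_of_slope (x / - y) = Complex (x / - y) (-1) / complex_of_real (- 1 / y)"
    unfolding unit_normal_of_slope_def by simp
  also have "\<dots> = Complex x y" using y by (simp add: complex_eq_iff field_simps)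
  finally show ?thesis unfolding N by simp
qed

(* In the frame of the edge, in which Gam is the graph of gam and the edge normal is -i, the
   domain normals along the boundary arc point downwards and support the graph. *)
lemma edge_frame_normal:
  assumes ons: "outward_normal_sel \<Omega> nt" and ab: "a \<noteq> b"
    and fr: "\<And>x. x \<in> {0..cmod (b - a)} \<Longrightarrow> Gam gam a b x \<in> frontier \<Omega>"
    and close: "\<And>x. x \<in> {0..cmod (b - a)} \<Longrightarrow> cmod (onormal a b - nt (Gam gam a b x)) < 1"
  defines "N \<equiv> \<lambda>x. nt (Gam gam a b x) * cnj ((b - a) / cmod (b - a))"
  shows "\<And>x. nt (Gam gam a b x) = (b - a) / cmod (b - a) * N x"
    and "\<And>x. x \<in> {0..cmod (b - a)} \<Longrightarrow> cmod (N x) = 1"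
    and "\<And>x. x \<in> {0..cmod (b - a)} \<Longrightarrow> Im (N x) < 0"
    and "\<And>x y. x \<in> {0..cmod (b - a)} \<Longrightarrow> y \<in> {0..cmod (b - a)} \<Longrightarrow>
      Re (N x) * (y - x) + Im (N x) * (gam (closed_segment a b) y - gam (closed_segment a b) x) \<le> 0"
proof -
  define u where "u = (b - a) / cmod (b - a)"
  have u: "cmod u = 1" using ab by (simp add: u_def norm_divide)
  then have "u * cnj u = 1" by (simp add: complex_norm_square[symmetric])
  then show nt_N: "nt (Gam gam a b x) = (b - a) / cmod (b - a) * N x" for x
    unfolding N_def u_def[symmetric] by (simp add: algebra_simps)
  show "cmod (N x) = 1" if "x \<in> {0..cmod (b - a)}" for x
    using ons fr[OF that] u unfolding outward_normal_sel_def N_def u_def[symmetric] by (simp add: norm_mult)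
  show "Im (N x) < 0" if "x \<in> {0..cmod (b - a)}" for x
  proof -
    have "onormal a b = - \<i> * u" unfolding onormal_def u_def by simp
    then have "onormal a b - nt (Gam gam a b x) = u * (- \<i> - N x)"
      using nt_N[of x] unfolding u_def[symmetric] by (simp add: algebra_simps)
    then have "cmod (- \<i> - N x) < 1" using close[OF that] u by (simp add: norm_mult)
    moreover have "\<bar>Im (N x) + 1\<bar> \<le> cmod (- \<i> - N x)"
      using abs_Im_le_cmod[of "- \<i> - N x"] by (simp add: abs_minus_commute)
    ultimately show ?thesis by linarith
  qed
  define g where "g = gam (closed_segment a b)"
  show "Re (N x) * (y - x) + Im (N x) * (g y - g x) \<le> 0"
    if "x \<in> {0..cmod (b - a)}" "y \<in> {0..cmod (b - a)}" for x y
  proof -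
    have "Gam gam a b y - Gam gam a b x = u * (of_real (y - x) + \<i> * of_real (g y - g x))"
      unfolding Gam_def u_def g_def by (simp add: algebra_simps)
    then have "inner (N x) (of_real (y - x) + \<i> * of_real (g y - g x))
        = inner (nt (Gam gam a b x)) (Gam gam a b y - Gam gam a b x)"
      by (simp add: nt_N inner_mult_unit[OF u] u_def[symmetric])
    also have "\<dots> \<le> 0"
      using that fr by (intro outward_normal_sel_closure[OF ons]) (auto simp: frontier_def)
    finally show ?thesis by (simp add: inner_complex_def)
  qed
qed

lemma boundary_normal_monotone_param:
  assumes ons: "outward_normal_sel \<Omega> nt" and ab: "a \<noteq> b"
    and fr: "\<And>x. x \<in> {0..cmod (b - a)} \<Longrightarrow> Gam gam a b x \<in> frontier \<Omega>"
    and close: "\<And>x. x \<in> {0..cmod (b - a)} \<Longrightarrow> cmod (onormal a b - nt (Gam gam a b x)) < 1"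
  obtains \<sigma> where "mono \<sigma>"
    "\<And>x. x \<in> {0..cmod (b - a)} \<Longrightarrow>
       nt (Gam gam a b x) = (b - a) / cmod (b - a) * unit_normal_of_slope (\<sigma> x)"
proof -
  define N where "N x = nt (Gam gam a b x) * cnj ((b - a) / cmod (b - a))" for x
  define I where "I = {0..cmod (b - a)}"
  note frame = edge_frame_normal[OF ons ab fr close]
  have nt_N: "nt (Gam gam a b x) = (b - a) / cmod (b - a) * N x" for x
    using frame(1) unfolding N_def by blast
  have N_unit: "cmod (N x) = 1" and N_neg: "Im (N x) < 0" if "x \<in> I" for x
    using frame(2,3) that unfolding N_def I_def by blast+
  have supp: "Re (N x) * (y - x) + Im (N x) * (gam (closed_segment a b) y - gam (closed_segment a b) x) \<le> 0"
    if "x \<in> I" "y \<in> I" for x y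
    using frame(4) that unfolding N_def I_def by blast
  define \<sigma> where "\<sigma> x = Re (N (max 0 (min (cmod (b - a)) x))) / - Im (N (max 0 (min (cmod (b - a)) x)))" for x
  show ?thesis
  proof
    show "mono \<sigma>"
      unfolding mono_def \<sigma>_def
      by (intro allI impI support_slope_mono[where I = I and g = "gam (closed_segment a b)"] N_neg supp)
        (auto simp: I_def)
    fix x assume x: "x \<in> {0..cmod (b - a)}"
    then have "\<sigma> x = Re (N x) / - Im (N x)" unfolding \<sigma>_def by simp
    then show "nt (Gam gam a b x) = (b - a) / cmod (b - a) * unit_normal_of_slope (\<sigma> x)"
      using nt_N unit_normal_of_slope_eq[OF N_unit N_neg] x unfolding I_def by simp
  qed
qed

lemma integrable_bounded_borel:
  fixes H :: "real \<Rightarrow> real"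
  assumes "H \<in> borel_measurable borel" "\<And>t. t \<in> {a..b} \<Longrightarrow> \<bar>H t\<bar> \<le> B"
  shows "H integrable_on {a..b}"
proof (rule measurable_bounded_by_integrable_imp_integrable_real)
  have "H \<circ> id \<in> borel_measurable (lebesgue_on {a..b})"
    using assms(1) by (intro measurable_comp[OF id_borel_measurable_lebesgue_on]) simp
  then show "H \<in> borel_measurable (lebesgue_on {a..b})" by simp
qed (use assms(2) in auto)

lemma integrable_inner_boundary_normal:
  fixes V :: "real \<Rightarrow> complex"
  assumes ons: "outward_normal_sel \<Omega> nt" and ab: "a \<noteq> b"
    and fr: "\<And>x. x \<in> {0..cmod (b - a)} \<Longrightarrow> Gam gam a b x \<in> frontier \<Omega>"
    and close: "\<And>x. x \<in> {0..cmod (b - a)} \<Longrightarrow> cmod (onormal a b - nt (Gam gam a b x)) < 1"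
    and V: "continuous_on UNIV V"
  shows "(\<lambda>t. (inner (V t) (nt (Gam gam a b (cmod (complex_of_real t * (b - a))))))\<^sup>2) integrable_on {0..1}"
proof -
  obtain \<sigma> where \<sigma>: "mono \<sigma>" and nt: "\<And>x. x \<in> {0..cmod (b - a)} \<Longrightarrow>
      nt (Gam gam a b x) = (b - a) / cmod (b - a) * unit_normal_of_slope (\<sigma> x)"
    using boundary_normal_monotone_param[OF ons ab fr close] by blast
  define u where "u = (b - a) / cmod (b - a)"
  have u: "cmod u = 1" using ab by (simp add: u_def norm_divide)
  define H where "H t = (inner (V t) (u * unit_normal_of_slope (\<sigma> (t * cmod (b - a)))))\<^sup>2" for t
  \<comment> \<open>monotone functions are Borel measurable, although \<open>nt\<close> itself need not be\<close>
  have "\<sigma> \<in> borel_measurable borel" using \<sigma> by (rule borel_measurable_mono)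
  then have "(\<lambda>t. \<sigma> (t * cmod (b - a))) \<in> borel_measurable borel" by measurable
  then have "(\<lambda>t. unit_normal_of_slope (\<sigma> (t * cmod (b - a)))) \<in> borel_measurable borel"
    by (rule borel_measurable_continuous_on[OF continuous_on_unit_normal_of_slope])
  then have H_meas: "H \<in> borel_measurable borel"
    unfolding H_def using borel_measurable_continuous_onI[OF V] by measurable
  obtain B where B: "\<And>t. t \<in> {0..1} \<Longrightarrow> norm (V t) \<le> B"
    using compact_imp_bounded[OF compact_continuous_image[OF continuous_on_subset[OF V] compact_Icc]]
    unfolding bounded_iff by blast
  have H_bound: "\<bar>H t\<bar> \<le> B\<^sup>2" if "t \<in> {0..1}" for t
  proof -
    have "\<bar>inner (V t) (u * unit_normal_of_slope (\<sigma> (t * cmod (b - a))))\<bar> \<le> B"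
      using Cauchy_Schwarz_ineq2[of "V t" "u * unit_normal_of_slope (\<sigma> (t * cmod (b - a)))"] u B[OF that]
      by (simp add: norm_mult)
    then have "(inner (V t) (u * unit_normal_of_slope (\<sigma> (t * cmod (b - a)))))\<^sup>2 \<le> B\<^sup>2"
      by (metis abs_ge_zero power2_abs power_mono)
    then show ?thesis unfolding H_def by simp
  qed
  have "H integrable_on {0..1}" using H_meas H_bound by (rule integrable_bounded_borel)
  moreover have "H t = (inner (V t) (nt (Gam gam a b (cmod (complex_of_real t * (b - a))))))\<^sup>2"
    if "t \<in> {0..1}" for t
  proof -
    have "cmod (complex_of_real t * (b - a)) = t * cmod (b - a)" using that by (simp add: norm_mult)
    moreover have "t * cmod (b - a) \<in> {0..cmod (b - a)}" using that by (auto intro: mult_left_le_one_le)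
    ultimately show ?thesis unfolding H_def u_def using nt by simp
  qed
  ultimately show ?thesis by (rule integrable_eq)
qed

section \<open>Edge integrals\<close>

abbreviation edge_pt :: "complex \<Rightarrow> complex \<Rightarrow> real \<Rightarrow> complex" where
  "edge_pt a b t \<equiv> a + complex_of_real t * (b - a)"

lemma integral_nonneg_unconditional:
  fixes f :: "'a::euclidean_space \<Rightarrow> real"
  assumes "\<And>t. t \<in> S \<Longrightarrow> 0 \<le> f t"
  shows "0 \<le> integral S f"
proof (cases "f integrable_on S")
  case True
  then show ?thesis using assms by (rule integral_nonneg)
qed (simp add: not_integrable_integral)

lemma integral_le_const_unconditional:
  fixes f :: "real \<Rightarrow> real"
  assumes "\<And>t. t \<in> {0..1} \<Longrightarrow> f t \<le> B" "0 \<le> B"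
  shows "integral {0..1::real} f \<le> B"
proof (cases "f integrable_on {0..1}")
  case True
  then have "integral {0..1} f \<le> integral {0..1::real} (\<lambda>t. B)"
    by (rule integral_le) (use assms in auto)
  then show ?thesis by simp
qed (use assms in \<open>simp add: not_integrable_integral\<close>)

lemma integral_le_scaled_plus_const:
  fixes f g :: "real \<Rightarrow> real"
  assumes g: "g integrable_on {0..1}" "\<And>t. t \<in> {0..1} \<Longrightarrow> 0 \<le> g t"
    and fg: "\<And>t. t \<in> {0..1} \<Longrightarrow> f t \<le> c * g t + B" and "0 \<le> c" "0 \<le> B"
  shows "integral {0..1::real} f \<le> c * integral {0..1} g + B"
proof (cases "f integrable_on {0..1}")
  case True
  have "(\<lambda>t. c * g t) integrable_on {0..1}" using integrable_on_cmult_left[OF g(1), of c] by simp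
  then have cgB: "(\<lambda>t. c * g t + B) integrable_on {0..1}" by (intro integrable_add) auto
  have "integral {0..1} f \<le> integral {0..1} (\<lambda>t. c * g t + B)"
    using True cgB fg by (rule integral_le)
  also have "\<dots> = integral {0..1} (\<lambda>t. c * g t) + integral {0..1::real} (\<lambda>t. B)"
    by (rule integral_add) (use \<open>(\<lambda>t. c * g t) integrable_on {0..1}\<close> in auto)
  also have "\<dots> = c * integral {0..1} g + B" by simp
  finally show ?thesis .
next
  case False
  have "0 \<le> integral {0..1} g" using g(2) by (rule integral_nonneg_unconditional)
  then show ?thesis using False assms by (simp add: not_integrable_integral)
qed

lemma edge_int_nonneg:
  assumes "\<And>t. t \<in> {0..1} \<Longrightarrow> 0 \<le> f (edge_pt a b t)"
  shows "0 \<le> edge_int a b f"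
  unfolding edge_int_def using assms by (intro mult_nonneg_nonneg norm_ge_zero integral_nonneg_unconditional)

lemma inner_sq_le:
  fixes w d :: complex
  assumes "(cmod w)\<^sup>2 \<le> V" "cmod d \<le> D"
  shows "(inner w d)\<^sup>2 \<le> V * D\<^sup>2"
proof -
  have "(inner w d)\<^sup>2 \<le> (cmod w * cmod d)\<^sup>2"
    using Cauchy_Schwarz_ineq2[of w d] abs_le_square_iff[of "inner w d" "cmod w * cmod d"] by simp
  also have "\<dots> \<le> V * D\<^sup>2"
    using assms order_trans[OF zero_le_power2 assms(1)] unfolding power_mult_distrib
    by (intro mult_mono power_mono) auto
  finally show ?thesis .
qed

lemma edge_int_inner_sq_le:
  fixes W n :: "complex \<Rightarrow> complex"
  assumes W: "\<And>t. t \<in> {0..1} \<Longrightarrow> (cmod (W (edge_pt a b t)))\<^sup>2 \<le> V"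
    and n: "\<And>t. t \<in> {0..1} \<Longrightarrow> cmod (n (edge_pt a b t)) \<le> 1"
  shows "edge_int a b (\<lambda>z. (inner (W z) (n z))\<^sup>2) \<le> cmod (b - a) * V"
proof -
  have "0 \<le> V" using order_trans[OF zero_le_power2 W[of 0]] by simp
  then have "integral {0..1} (\<lambda>t. (inner (W (edge_pt a b t)) (n (edge_pt a b t)))\<^sup>2) \<le> V"
    using inner_sq_le[OF W n] by (intro integral_le_const_unconditional) auto
  then show ?thesis unfolding edge_int_def by (simp add: mult_left_mono)
qed

lemma edge_int_inner_sq_swap:
  fixes W n m :: "complex \<Rightarrow> complex"
  assumes W: "\<And>t. t \<in> {0..1} \<Longrightarrow> (cmod (W (edge_pt a b t)))\<^sup>2 \<le> V"
    and near: "\<And>t. t \<in> {0..1} \<Longrightarrow> cmod (n (edge_pt a b t) - m (edge_pt a b t)) \<le> \<delta>"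
    and int_m: "(\<lambda>t. (inner (W (edge_pt a b t)) (m (edge_pt a b t)))\<^sup>2) integrable_on {0..1}"
  shows "edge_int a b (\<lambda>z. (inner (W z) (n z))\<^sup>2)
           \<le> 2 * edge_int a b (\<lambda>z. (inner (W z) (m z))\<^sup>2) + cmod (b - a) * (2 * V * \<delta>\<^sup>2)"
proof -
  have "(inner (W z) (n z))\<^sup>2 \<le> 2 * (inner (W z) (m z))\<^sup>2 + 2 * V * \<delta>\<^sup>2"
    if z: "z = edge_pt a b t" and t: "t \<in> {0..1}" for t z
  proof -
    have split: "inner (W z) (n z) = inner (W z) (m z) + inner (W z) (n z - m z)"
      by (simp add: inner_diff_right)
    have sq: "(x + y)\<^sup>2 \<le> 2 * x\<^sup>2 + 2 * y\<^sup>2" for x y :: real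
      using zero_le_power2[of "x - y"] by (simp add: power2_eq_square algebra_simps)
    have "(inner (W z) (n z - m z))\<^sup>2 \<le> V * \<delta>\<^sup>2"
      using W[OF t] near[OF t] unfolding z by (rule inner_sq_le)
    then show ?thesis unfolding split using sq[of "inner (W z) (m z)" "inner (W z) (n z - m z)"] by linarith
  qed
  moreover have "0 \<le> V * \<delta>\<^sup>2"
    using order_trans[OF zero_le_power2 W[of 0]] by simp
  ultimately have "integral {0..1} (\<lambda>t. (inner (W (edge_pt a b t)) (n (edge_pt a b t)))\<^sup>2)
      \<le> 2 * integral {0..1} (\<lambda>t. (inner (W (edge_pt a b t)) (m (edge_pt a b t)))\<^sup>2) + 2 * V * \<delta>\<^sup>2"
    by (intro integral_le_scaled_plus_const[OF int_m]) auto
  then have "cmod (b - a) * integral {0..1} (\<lambda>t. (inner (W (edge_pt a b t)) (n (edge_pt a b t)))\<^sup>2)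
      \<le> cmod (b - a) * (2 * integral {0..1} (\<lambda>t. (inner (W (edge_pt a b t)) (m (edge_pt a b t)))\<^sup>2)
                        + 2 * V * \<delta>\<^sup>2)"
    by (rule mult_left_mono) simp
  then show ?thesis unfolding edge_int_def by (simp add: algebra_simps)
qed

lemma edge_int_inner_sq_compare:
  fixes W n m :: "complex \<Rightarrow> complex"
  assumes h: "cmod (b - a) \<le> h" and \<delta>: "0 \<le> \<delta>" "\<delta> \<le> \<kappa> * h"
    and W: "\<And>t. t \<in> {0..1} \<Longrightarrow> (cmod (W (edge_pt a b t)))\<^sup>2 \<le> V"
    and n: "\<And>t. t \<in> {0..1} \<Longrightarrow> cmod (n (edge_pt a b t)) \<le> 1"
    and near: "\<And>t. t \<in> {0..1} \<Longrightarrow> cmod (n (edge_pt a b t) - m (edge_pt a b t)) \<le> \<delta>"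
    and int_m: "\<delta> < 1 \<Longrightarrow> (\<lambda>t. (inner (W (edge_pt a b t)) (m (edge_pt a b t)))\<^sup>2) integrable_on {0..1}"
  shows "edge_int a b (\<lambda>z. (inner (W z) (n z))\<^sup>2)
           \<le> 2 * edge_int a b (\<lambda>z. (inner (W z) (m z))\<^sup>2) + 2 * \<kappa>\<^sup>2 * h ^ 3 * V"
proof -
  have V: "0 \<le> V" using order_trans[OF zero_le_power2 W[of 0]] by simp
  have h0: "0 \<le> h" using h norm_ge_zero order_trans by blast
  have Em: "0 \<le> edge_int a b (\<lambda>z. (inner (W z) (m z))\<^sup>2)" by (rule edge_int_nonneg) simp
  show ?thesis
  proof (cases "\<delta> < 1")
    case True
    have "cmod (b - a) * (2 * V * \<delta>\<^sup>2) \<le> h * (2 * V * (\<kappa> * h)\<^sup>2)"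
      using h \<delta> V h0 by (intro mult_mono mult_left_mono power_mono) auto
    also have "\<dots> = 2 * \<kappa>\<^sup>2 * h ^ 3 * V" by (simp add: power2_eq_square power3_eq_cube)
    finally show ?thesis
      using edge_int_inner_sq_swap[where W = W and n = n and m = m, OF W near int_m[OF True]] by linarith
  next
    \<comment> \<open>then \<open>\<kappa> * h \<ge> 1\<close>: the crude bound needs no integrability of the \<open>m\<close>-term\<close>
    case False
    then have "1 \<le> (\<kappa> * h)\<^sup>2" using \<delta> by (simp add: one_le_power)
    have "edge_int a b (\<lambda>z. (inner (W z) (n z))\<^sup>2) \<le> cmod (b - a) * V"
      by (rule edge_int_inner_sq_le[where W = W and n = n, OF W n])
    also have "\<dots> \<le> h * V" using h V by (rule mult_right_mono)
    also have "\<dots> \<le> h * V * (\<kappa> * h)\<^sup>2"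
      using mult_left_mono[OF \<open>1 \<le> (\<kappa> * h)\<^sup>2\<close>, of "h * V"] h0 V by simp
    also have "\<dots> = \<kappa>\<^sup>2 * h ^ 3 * V" by (simp add: power2_eq_square power3_eq_cube)
    moreover have "0 \<le> \<kappa>\<^sup>2 * h ^ 3 * V" using V h0 by simp
    ultimately show ?thesis using Em by linarith
  qed
qed

section \<open>Comparison of the two norms\<close>

lemma mesh_ok_elem:
  assumes "mesh_ok \<Omega> C1 C2 C3 C4 C4' C5 C6 C7 M T ctr rad gam nt" "K \<in> T"
  shows "is_ccw_polygon K" "star_ball (region K) (ctr K) (rad K)" "C1 * hK K \<le> rad K"
  using assms unfolding mesh_ok_def mesh_partition_def by auto

lemma mesh_ok_boundary_edge:
  assumes "mesh_ok \<Omega> C1 C2 C3 C4 C4' C5 C6 C7 M T ctr rad gam nt" "K \<in> T" "(a, b) \<in> edges K"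
    and "closed_segment a b \<in> bedges T" "x \<in> {0..cmod (b - a)}"
  shows "Gam gam a b x \<in> frontier \<Omega>" "cmod (onormal a b - nt (Gam gam a b x)) \<le> C4' * smax T"
  using assms unfolding mesh_ok_def Let_def by fast+

lemma hK_pos:
  assumes "mesh_ok \<Omega> C1 C2 C3 C4 C4' C5 C6 C7 M T ctr rad gam nt" "K \<in> T"
  shows "0 < hK K"
proof -
  have "0 < rad K" "ball (ctr K) (rad K) \<subseteq> region K"
    using mesh_ok_elem(2)[OF assms] unfolding star_ball_def by auto
  then have "diameter (ball (ctr K) (rad K)) \<le> hK K"
    unfolding hK_def by (intro diameter_subset compact_imp_bounded compact_region)
  then show ?thesis using \<open>0 < rad K\<close> by simp
qed

lemma smax_le_hK:
  assumes mesh: "mesh_ok \<Omega> C1 C2 C3 C4 C4' C5 C6 C7 M T ctr rad gam nt"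
    and K: "K \<in> T" and e: "e \<in> bedges T"
  shows "0 \<le> smax T" "smax T \<le> C3 * hK K"
proof -
  have "finite T" using mesh unfolding mesh_ok_def mesh_partition_def by auto
  then have "finite (\<Union>K\<in>T. (\<lambda>(a, b). closed_segment a b) ` edges K)" by (simp add: finite_edges)
  moreover have "Eh T \<subseteq> (\<Union>K\<in>T. (\<lambda>(a, b). closed_segment a b) ` edges K)" unfolding Eh_def by auto
  ultimately have "finite (Eh T)" by (rule finite_subset[rotated])
  then have "smax T \<in> diameter ` bedges T"
    unfolding smax_def bedges_def using e unfolding bedges_def by (intro Max_in) auto
  then obtain a b K' where K': "K' \<in> T" "(a, b) \<in> edges K'" "smax T = diameter (closed_segment a b)"
    unfolding bedges_def Eh_def by auto
  show "0 \<le> smax T" unfolding K'(3) by (rule diameter_ge_0) (rule bounded_closed_segment)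
  have "smax T \<le> hK K'" unfolding K'(3) hK_def
    by (rule diameter_subset[OF closed_segment_edge_subset_region[OF K'(2)]
          compact_imp_bounded[OF compact_region]])
  also have "hK K' \<le> C3 * hK K" using mesh K K'(1) unfolding mesh_ok_def by blast
  finally show "smax T \<le> C3 * hK K" .
qed

lemma card_boundary_edges_le:
  assumes mesh: "mesh_ok \<Omega> C1 C2 C3 C4 C4' C5 C6 C7 M T ctr rad gam nt" and K: "K \<in> T"
  shows "card {(a, b) \<in> edges K. closed_segment a b \<in> bedges T} \<le> M"
proof -
  have "ctr K \<in> region K" using mesh_ok_elem(2)[OF mesh K] unfolding star_ball_def by auto
  moreover have "{(a, b) \<in> edges K. closed_segment a b \<in> bedges T} =
      {(a, b) \<in> edges K. closed_segment a b \<in> bedges T \<and> ctr K \<in> convex hull {a, b, ctr K}}"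
    by (auto simp: hull_inc)
  ultimately show ?thesis using mesh K unfolding mesh_ok_def by auto
qed

definition elem_mass :: "(elem \<Rightarrow> complex \<Rightarrow> complex) \<Rightarrow> elem \<Rightarrow> real" where
  "elem_mass v0 K = integral (region K) (\<lambda>z. (cmod (v0 K z))\<^sup>2)"

definition edge_jump :: "(elem \<Rightarrow> complex \<Rightarrow> complex \<Rightarrow> complex \<Rightarrow> complex)
    \<Rightarrow> (complex set \<Rightarrow> complex) \<Rightarrow> (elem \<Rightarrow> complex \<Rightarrow> complex) \<Rightarrow> (complex set \<Rightarrow> complex \<Rightarrow> real)
    \<Rightarrow> elem \<Rightarrow> complex \<Rightarrow> complex \<Rightarrow> real"
  where "edge_jump nn ne v0 vb K a b = edge_int a b (\<lambda>z.
    (inner (v0 K z - complex_of_real (vb (closed_segment a b) z) * ne (closed_segment a b)) (nn K a b z))\<^sup>2)"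

definition elem_jump :: "(elem \<Rightarrow> complex \<Rightarrow> complex \<Rightarrow> complex \<Rightarrow> complex)
    \<Rightarrow> (complex set \<Rightarrow> complex) \<Rightarrow> (elem \<Rightarrow> complex \<Rightarrow> complex) \<Rightarrow> (complex set \<Rightarrow> complex \<Rightarrow> real)
    \<Rightarrow> elem \<Rightarrow> real"
  where "elem_jump nn ne v0 vb K = 1 / hK K * (\<Sum>(a, b)\<in>edges K. edge_jump nn ne v0 vb K a b)"

lemma Vnorm_with_eq:
  "Vnorm_with nn \<rho> T ne v0 vb
     = sqrt ((\<Sum>K\<in>T. elem_mass v0 K) + \<rho> * (\<Sum>K\<in>T. elem_jump nn ne v0 vb K))"
  unfolding Vnorm_with_def elem_mass_def elem_jump_def edge_jump_def ..

lemma elem_mass_nonneg: "0 \<le> elem_mass v0 K"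
  unfolding elem_mass_def by (simp add: integral_nonneg_unconditional)

lemma elem_jump_nonneg: "0 \<le> elem_jump nn ne v0 vb K"
proof -
  have "0 \<le> hK K" unfolding hK_def by (intro diameter_ge_0 compact_imp_bounded compact_region)
  moreover have "0 \<le> edge_jump nn ne v0 vb K a b" for a b
    unfolding edge_jump_def by (rule edge_int_nonneg) simp
  ultimately show ?thesis unfolding elem_jump_def by (simp add: sum_nonneg case_prod_unfold)
qed

lemma Vh_space_continuous_rep:
  assumes "Vh_space \<alpha> T v0 vb" "K \<in> T"
  obtains f where "continuous_on UNIV f" "\<And>z. z \<in> region K \<Longrightarrow> v0 K z = f z"
proof -
  obtain c c' where "\<forall>z\<in>region K. Re (v0 K z) = poly2 \<alpha> c z"
    and "\<forall>z\<in>region K. Im (v0 K z) = poly2 \<alpha> c' z"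
    using assms unfolding Vh_space_def poly2_on_iff by blast
  then show ?thesis
    by (intro that[of "\<lambda>z. of_real (poly2 \<alpha> c z) + \<i> * of_real (poly2 \<alpha> c' z)"])
      (auto intro!: continuous_intros simp: complex_eq_iff)
qed

lemma elem_inverse_estimate:
  assumes mesh: "mesh_ok \<Omega> C1 C2 C3 C4 C4' C5 C6 C7 M T ctr rad gam nt"
    and V: "Vh_space \<alpha> T v0 vb" and C1: "C1 > 0" and K: "K \<in> T" and z: "z \<in> region K"
  shows "(cmod (v0 K z))\<^sup>2 \<le> inverse_const C1 \<alpha> / (hK K)\<^sup>2 * elem_mass v0 K"
proof -
  have "0 < rad K" "ball (ctr K) (rad K) \<subseteq> region K"
    using mesh_ok_elem(2)[OF mesh K] unfolding star_ball_def by auto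
  moreover have "poly2_on \<alpha> (region K) (\<lambda>z. Re (v0 K z))" "poly2_on \<alpha> (region K) (\<lambda>z. Im (v0 K z))"
    using V K unfolding Vh_space_def by auto
  ultimately show ?thesis
    using mesh_ok_elem(3)[OF mesh K] unfolding elem_mass_def hK_def
    by (intro poly2_inverse_estimate[OF compact_region C1 _ _ _ _ _ z]) auto
qed

lemma ntil_on_boundary_edge:
  fixes \<Omega> :: "complex set"
  assumes ons: "outward_normal_sel \<Omega> nt"
    and mesh: "mesh_ok \<Omega> C1 C2 C3 C4 C4' C5 C6 C7 M T ctr rad gam nt" and C4': "0 \<le> C4'"
    and K: "K \<in> T" and ab: "(a, b) \<in> edges K" and bd: "closed_segment a b \<in> bedges T"
  shows "t \<in> {0..1} \<Longrightarrow> cmod (ntil T nt gam a b (edge_pt a b t)) = 1"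
    and "t \<in> {0..1} \<Longrightarrow> cmod (onormal a b - ntil T nt gam a b (edge_pt a b t)) \<le> C4' * smax T"
    and "0 \<le> C4' * smax T" "C4' * smax T \<le> C3 * C4' * hK K"
    and "continuous_on UNIV f \<Longrightarrow> C4' * smax T < 1 \<Longrightarrow>
      (\<lambda>t. (inner (f (edge_pt a b t)) (ntil T nt gam a b (edge_pt a b t)))\<^sup>2) integrable_on {0..1}"
proof -
  note A4 = mesh_ok_boundary_edge[OF mesh K ab bd]
  have ntil: "ntil T nt gam a b (edge_pt a b s) = nt (Gam gam a b (cmod (complex_of_real s * (b - a))))" for s
    unfolding ntil_def using bd by simp
  have x: "cmod (complex_of_real s * (b - a)) \<in> {0..cmod (b - a)}" if "s \<in> {0..1}" for s
    using that by (auto simp: norm_mult intro: mult_left_le_one_le)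
  show "cmod (ntil T nt gam a b (edge_pt a b t)) = 1" if "t \<in> {0..1}"
    using ons A4(1)[OF x[OF that]] unfolding ntil outward_normal_sel_def by simp
  show near: "cmod (onormal a b - ntil T nt gam a b (edge_pt a b t)) \<le> C4' * smax T" if "t \<in> {0..1}"
    unfolding ntil by (rule A4(2)[OF x[OF that]])
  show "0 \<le> C4' * smax T" using order_trans[OF norm_ge_zero A4(2)[where x = 0]] by simp
  show "C4' * smax T \<le> C3 * C4' * hK K"
    using mult_left_mono[OF smax_le_hK(2)[OF mesh K bd] C4'] by (simp add: mult_ac)
  assume f: "continuous_on UNIV f" and small: "C4' * smax T < 1"
  have "(\<lambda>s. (inner (f (edge_pt a b s)) (nt (Gam gam a b (cmod (complex_of_real s * (b - a))))))\<^sup>2)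
      integrable_on {0..1}"
  proof (rule integrable_inner_boundary_normal[OF ons])
    show "a \<noteq> b" using ab mesh_ok_elem(1)[OF mesh K] by (intro edge_endpoints_distinct)
    show "continuous_on UNIV (\<lambda>s. f (edge_pt a b s))"
      by (intro continuous_on_compose2[OF f] continuous_intros) auto
  qed (use A4 small in \<open>fastforce+\<close>)
  then show "(\<lambda>t. (inner (f (edge_pt a b t)) (ntil T nt gam a b (edge_pt a b t)))\<^sup>2) integrable_on {0..1}"
    unfolding ntil .
qed

lemma edge_pt_in_segment: "t \<in> {0..1} \<Longrightarrow> edge_pt a b t \<in> closed_segment a b"
  unfolding in_segment by (auto simp: scaleR_conv_of_real algebra_simps intro!: exI[of _ t])

lemma norm_onormal: "a \<noteq> b \<Longrightarrow> cmod (onormal a b) = 1"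
  by (simp add: onormal_def norm_mult norm_divide)

lemma boundary_edge_jump_compare:
  fixes \<Omega> :: "complex set"
  assumes ons: "outward_normal_sel \<Omega> nt"
    and mesh: "mesh_ok \<Omega> C1 C2 C3 C4 C4' C5 C6 C7 M T ctr rad gam nt" and C1: "C1 > 0" and C4': "0 \<le> C4'"
    and V: "Vh_space \<alpha> T v0 vb" and K: "K \<in> T" and ab: "(a, b) \<in> edges K"
    and bd: "closed_segment a b \<in> bedges T"
    and nn: "nn \<in> {\<lambda>K a b z. onormal a b, \<lambda>K a b z. ntil T nt gam a b z}"
    and nn': "nn' \<in> {\<lambda>K a b z. onormal a b, \<lambda>K a b z. ntil T nt gam a b z}"
  shows "edge_jump nn ne v0 vb K a b \<le> 2 * edge_jump nn' ne v0 vb K a b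
           + 2 * (C3 * C4')\<^sup>2 * inverse_const C1 \<alpha> * hK K * elem_mass v0 K"
proof -
  note ntil = ntil_on_boundary_edge[OF ons mesh C4' K ab bd]
  define W where "W z = v0 K z - complex_of_real (vb (closed_segment a b) z) * ne (closed_segment a b)" for z
  obtain f where f: "continuous_on UNIV f" "\<And>z. z \<in> region K \<Longrightarrow> v0 K z = f z"
    using Vh_space_continuous_rep[OF V K] by blast
  have region: "edge_pt a b t \<in> region K" if "t \<in> {0..1}" for t
    using edge_pt_in_segment[OF that] closed_segment_edge_subset_region[OF ab] by auto
  have W_v0: "W (edge_pt a b t) = v0 K (edge_pt a b t)" if "t \<in> {0..1}" for t
    using V bd edge_pt_in_segment[OF that] unfolding W_def Vh_space_def by auto
  have W_bound: "(cmod (W (edge_pt a b t)))\<^sup>2 \<le> inverse_const C1 \<alpha> / (hK K)\<^sup>2 * elem_mass v0 K"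
    if "t \<in> {0..1}" for t
    using elem_inverse_estimate[OF mesh V C1 K region[OF that]] W_v0[OF that] by simp
  have unit: "cmod (m K a b (edge_pt a b t)) \<le> 1"
    if "m \<in> {\<lambda>K a b z. onormal a b, \<lambda>K a b z. ntil T nt gam a b z}" "t \<in> {0..1}" for m t
    using that ntil(1) norm_onormal[OF edge_endpoints_distinct[OF mesh_ok_elem(1)[OF mesh K] ab]] by auto
  have near: "cmod (nn K a b (edge_pt a b t) - nn' K a b (edge_pt a b t)) \<le> C4' * smax T"
    if "t \<in> {0..1}" for t
    using nn nn' that ntil(2,3) by (auto simp: norm_minus_commute)
  have int: "(\<lambda>t. (inner (W (edge_pt a b t)) (nn' K a b (edge_pt a b t)))\<^sup>2) integrable_on {0..1}"
    if "C4' * smax T < 1"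
  proof -
    have "(\<lambda>t. (inner (f (edge_pt a b t)) (onormal a b))\<^sup>2) integrable_on {0..1}"
      by (intro integrable_continuous_interval continuous_intros continuous_on_compose2[OF f(1)]) auto
    then have "(\<lambda>t. (inner (f (edge_pt a b t)) (nn' K a b (edge_pt a b t)))\<^sup>2) integrable_on {0..1}"
      using nn' ntil(5)[OF f(1) that] by auto
    then show ?thesis by (rule integrable_eq) (simp add: W_v0 f(2) region)
  qed
  have "edge_jump nn ne v0 vb K a b \<le> 2 * edge_jump nn' ne v0 vb K a b
      + 2 * (C3 * C4')\<^sup>2 * hK K ^ 3 * (inverse_const C1 \<alpha> / (hK K)\<^sup>2 * elem_mass v0 K)"
    unfolding edge_jump_def W_def[symmetric]
    by (intro edge_int_inner_sq_compare[OF edge_length_le_hK[OF ab] ntil(3,4) W_bound unit[OF nn] near int])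
  also have "\<dots> = 2 * edge_jump nn' ne v0 vb K a b
      + 2 * (C3 * C4')\<^sup>2 * inverse_const C1 \<alpha> * hK K * elem_mass v0 K"
    using hK_pos[OF mesh K] by (simp add: power2_eq_square power3_eq_cube)
  finally show ?thesis .
qed

lemma edge_jump_compare:
  fixes \<Omega> :: "complex set"
  assumes ons: "outward_normal_sel \<Omega> nt"
    and mesh: "mesh_ok \<Omega> C1 C2 C3 C4 C4' C5 C6 C7 M T ctr rad gam nt" and C1: "C1 > 0" and C4': "0 \<le> C4'"
    and V: "Vh_space \<alpha> T v0 vb" and K: "K \<in> T" and ab: "(a, b) \<in> edges K"
    and nn: "nn \<in> {\<lambda>K a b z. onormal a b, \<lambda>K a b z. ntil T nt gam a b z}"
    and nn': "nn' \<in> {\<lambda>K a b z. onormal a b, \<lambda>K a b z. ntil T nt gam a b z}"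
  shows "edge_jump nn ne v0 vb K a b \<le> 2 * edge_jump nn' ne v0 vb K a b
           + (if closed_segment a b \<in> bedges T
              then 2 * (C3 * C4')\<^sup>2 * inverse_const C1 \<alpha> * hK K * elem_mass v0 K else 0)"
proof (cases "closed_segment a b \<in> bedges T")
  case False
  then have "edge_jump nn ne v0 vb K a b = edge_jump nn' ne v0 vb K a b"
    using nn nn' unfolding edge_jump_def ntil_def by auto
  moreover have "0 \<le> edge_jump nn' ne v0 vb K a b" unfolding edge_jump_def by (rule edge_int_nonneg) simp
  ultimately show ?thesis using False by simp
qed (simp add: boundary_edge_jump_compare[OF assms(1-7) _ nn nn'])

lemma elem_jump_compare:
  fixes \<Omega> :: "complex set"
  assumes ons: "outward_normal_sel \<Omega> nt"
    and mesh: "mesh_ok \<Omega> C1 C2 C3 C4 C4' C5 C6 C7 M T ctr rad gam nt" and C1: "C1 > 0" and C4': "0 \<le> C4'"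
    and V: "Vh_space \<alpha> T v0 vb" and K: "K \<in> T"
    and nn: "nn \<in> {\<lambda>K a b z. onormal a b, \<lambda>K a b z. ntil T nt gam a b z}"
    and nn': "nn' \<in> {\<lambda>K a b z. onormal a b, \<lambda>K a b z. ntil T nt gam a b z}"
  shows "elem_jump nn ne v0 vb K
           \<le> 2 * elem_jump nn' ne v0 vb K + M * (2 * (C3 * C4')\<^sup>2 * inverse_const C1 \<alpha>) * elem_mass v0 K"
proof -
  define c where "c = 2 * (C3 * C4')\<^sup>2 * inverse_const C1 \<alpha> * hK K * elem_mass v0 K"
  have c: "0 \<le> c"
    unfolding c_def using hK_pos[OF mesh K] elem_mass_nonneg inverse_const_nonneg by simp
  have "(\<Sum>(a, b)\<in>edges K. edge_jump nn ne v0 vb K a b)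
      \<le> (\<Sum>(a, b)\<in>edges K. 2 * edge_jump nn' ne v0 vb K a b + (if closed_segment a b \<in> bedges T then c else 0))"
    unfolding c_def using edge_jump_compare[OF ons mesh C1 C4' V K _ nn nn'] by (intro sum_mono) auto
  also have "\<dots> = 2 * (\<Sum>(a, b)\<in>edges K. edge_jump nn' ne v0 vb K a b)
      + c * card {(a, b) \<in> edges K. closed_segment a b \<in> bedges T}"
    by (simp add: sum.distrib sum_distrib_left case_prod_unfold sum.inter_filter[symmetric] finite_edges)
  also have "\<dots> \<le> 2 * (\<Sum>(a, b)\<in>edges K. edge_jump nn' ne v0 vb K a b) + c * M"
    using card_boundary_edges_le[OF mesh K] c by (simp add: mult_left_mono)
  finally show ?thesis
    using hK_pos[OF mesh K] unfolding elem_jump_def c_def by (simp add: field_simps)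
qed

lemma Vnorm_with_le:
  assumes \<rho>: "0 \<le> \<rho>" and c: "0 \<le> c"
    and jump: "\<And>K. K \<in> T \<Longrightarrow> elem_jump nn ne v0 vb K \<le> 2 * elem_jump nn' ne v0 vb K + c * elem_mass v0 K"
  shows "Vnorm_with nn \<rho> T ne v0 vb \<le> sqrt (2 + \<rho> * c) * Vnorm_with nn' \<rho> T ne v0 vb"
proof -
  define A where "A = (\<Sum>K\<in>T. elem_mass v0 K)"
  define J where "J nn = (\<Sum>K\<in>T. elem_jump nn ne v0 vb K)" for nn
  have A: "0 \<le> A" and J: "0 \<le> J nn'"
    unfolding A_def J_def by (simp_all add: sum_nonneg elem_mass_nonneg elem_jump_nonneg)
  have "J nn \<le> 2 * J nn' + c * A"
    unfolding A_def J_def using jump by (simp add: sum_distrib_left sum.distrib[symmetric] sum_mono)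
  then have "A + \<rho> * J nn \<le> A + \<rho> * (2 * J nn' + c * A)" using \<rho> by (simp add: mult_left_mono)
  also have "\<dots> \<le> (2 + \<rho> * c) * (A + \<rho> * J nn')"
    using A J \<rho> c by (simp add: algebra_simps)
  finally show ?thesis
    unfolding Vnorm_with_eq A_def[symmetric] J_def[symmetric]
    using \<rho> c A J by (metis real_sqrt_le_mono real_sqrt_mult)
qed

theorem lemma4p3:
  fixes \<Omega> :: "complex set" and \<alpha> M :: nat
    and \<rho> C1 C2 C3 C4 C4' C5 C6 C7 :: real
  assumes "open \<Omega>" "convex \<Omega>" "bounded \<Omega>" "\<Omega> \<noteq> {}"
    and "\<rho> > 0"
    and "C1 > 0" "C2 > 0" "C3 > 0" "C4 > 0" "C4' > 0" "C5 > 0" "C6 > 0" "C7 > 0"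
  shows "\<exists>c C. c > 0 \<and> C > 0 \<and>
    (\<forall>T ctr rad gam nt ne v0 vb.
       outward_normal_sel \<Omega> nt \<and>
       mesh_ok \<Omega> C1 C2 C3 C4 C4' C5 C6 C7 M T ctr rad gam nt \<and>
       edge_normals T ne \<and> Vh_space \<alpha> T v0 vb \<longrightarrow>
         c * Vh_norm \<rho> T ne v0 vb \<le> Vh1_norm nt gam \<rho> T ne v0 vb \<and>
         Vh1_norm nt gam \<rho> T ne v0 vb \<le> C * Vh_norm \<rho> T ne v0 vb)"
proof -
  define D where "D = 2 + \<rho> * (M * (2 * (C3 * C4')\<^sup>2 * inverse_const C1 \<alpha>))"
  have "0 \<le> \<rho> * (M * (2 * (C3 * C4')\<^sup>2 * inverse_const C1 \<alpha>))"
    using \<open>\<rho> > 0\<close> by (intro mult_nonneg_nonneg inverse_const_nonneg) auto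
  then have D: "0 < D" unfolding D_def by linarith
  show ?thesis
  proof (intro exI conjI allI impI)
    show "0 < 1 / sqrt D" "0 < sqrt D" using D by auto
    fix T ctr rad gam nt ne v0 vb
    assume "outward_normal_sel \<Omega> nt \<and> mesh_ok \<Omega> C1 C2 C3 C4 C4' C5 C6 C7 M T ctr rad gam nt \<and>
      edge_normals T ne \<and> Vh_space \<alpha> T v0 vb"
    then have compare: "Vnorm_with nn \<rho> T ne v0 vb \<le> sqrt D * Vnorm_with nn' \<rho> T ne v0 vb"
      if "nn \<in> {\<lambda>K a b z. onormal a b, \<lambda>K a b z. ntil T nt gam a b z}"
        "nn' \<in> {\<lambda>K a b z. onormal a b, \<lambda>K a b z. ntil T nt gam a b z}" for nn nn'
      unfolding D_def using assms(5,6,10) that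
      by (intro Vnorm_with_le elem_jump_compare) (auto simp: inverse_const_nonneg)
    show "Vh1_norm nt gam \<rho> T ne v0 vb \<le> sqrt D * Vh_norm \<rho> T ne v0 vb"
      unfolding Vh_norm_def Vh1_norm_def by (rule compare) auto
    have "Vh_norm \<rho> T ne v0 vb \<le> sqrt D * Vh1_norm nt gam \<rho> T ne v0 vb"
      unfolding Vh_norm_def Vh1_norm_def by (rule compare) auto
    then show "1 / sqrt D * Vh_norm \<rho> T ne v0 vb \<le> Vh1_norm nt gam \<rho> T ne v0 vb"
      using D by (simp add: field_simps mult.commute)
  qed
qed

end
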